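(* Let $X$ be a locally compact Polish space and $\nu$ a non-atomic Radon measure on $X$. Let $K$ be a bounded, self-adjoint operator on the real Hilbert space $L^2(X,\nu)$ with $K\ge 0$ which is locally of trace class, and let $\varkappa(x,y)$ be the integral kernel of $\sqrt K$ and $k(x,y)=\int_X\varkappa(x,z)\varkappa(y,z)\,\nu(dz)$ the corresponding integral kernel of $K$. Then there exists a random field $(Y(x))_{x\in X}$ on a probability space $(\Omega,\mathcal A,P)$ such that the mapping $X\times\Omega\ni(x,\omega)\mapsto Y(x,\omega)$ is measurable, for $\nu$-a.a. $x\in X$ the random variable $Y(x)$ is Gaussian with mean $0$, and $$\mathbb E\big(Y(x)Y(y)\big)=k(x,y)$$ for $\nu^{\otimes 2}$-a.a. $(x,y)\in X^2$ and for $\nu$-a.a. $x=y\in X$.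
   Context: $\mathcal B_0(X)$ denotes the family of relatively compact Borel subsets of $X$. "Locally of trace class" means $\operatorname{Tr}(P_\Lambda K P_\Lambda)<\infty$ for every $\Lambda\in\mathcal B_0(X)$, where $P_\Lambda$ is the operator of multiplication by the indicator $\chi_\Lambda$. Under these assumptions $\sqrt K$ is an integral operator whose kernel $\varkappa$ satisfies $\int_\Lambda\int_X\varkappa(x,y)^2\,\nu(dx)\nu(dy)<\infty$ for all $\Lambda\in\mathcal B_0(X)$ (so $\varkappa(x,\cdot)\in L^2(X,\nu)$ for $\nu$-a.a. $x$), and $K$ is an integral operator with kernel $k(x,y)=(\varkappa(x,\cdot),\varkappa(y,\cdot))_{L^2(X,\nu)}$. *)

theory Defs
  imports "HOL-Probability.Probability"
begin

text \<open>Radon measure on a locally compact Polish space: Borel measure, finite on compact sets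
  (on Polish spaces locally finite Borel measures are automatically Radon).\<close>
definition radon_measure :: "'a::topological_space measure \<Rightarrow> bool" where
  "radon_measure \<nu> \<longleftrightarrow> sets \<nu> = sets borel \<and> (\<forall>C. compact C \<longrightarrow> emeasure \<nu> C < \<infinity>)"

definition non_atomic :: "'a measure \<Rightarrow> bool" where
  "non_atomic \<nu> \<longleftrightarrow> (\<forall>x. {x} \<in> sets \<nu> \<and> emeasure \<nu> {x} = 0)"

definition rel_compact_borel :: "'a::topological_space set set" where
  "rel_compact_borel = {L. L \<in> sets borel \<and> compact (closure L)}"

definition sq_integrable :: "'a measure \<Rightarrow> ('a \<Rightarrow> real) \<Rightarrow> bool" where
  "sq_integrable M f \<longleftrightarrow> f \<in> borel_measurable M \<and> integrable M (\<lambda>x. (f x)\<^sup>2)"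

definition int_op :: "'a measure \<Rightarrow> ('a \<Rightarrow> 'a \<Rightarrow> real) \<Rightarrow> ('a \<Rightarrow> real) \<Rightarrow> 'a \<Rightarrow> real" where
  "int_op M q f = (\<lambda>x. \<integral>y. q x y * f y \<partial>M)"

text \<open>q is the integral kernel of a bounded, self-adjoint, nonnegative operator on L^2(M)
  (this is the operator sqrt K).\<close>
definition bounded_sa_nonneg_kernel :: "'a measure \<Rightarrow> ('a \<Rightarrow> 'a \<Rightarrow> real) \<Rightarrow> bool" where
  "bounded_sa_nonneg_kernel M q \<longleftrightarrow>
     (\<lambda>(x,y). q x y) \<in> borel_measurable (M \<Otimes>\<^sub>M M) \<and>
     (AE z in M \<Otimes>\<^sub>M M. q (fst z) (snd z) = q (snd z) (fst z)) \<and>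
     (\<exists>C. \<forall>f. sq_integrable M f \<longrightarrow>
        (AE x in M. integrable M (\<lambda>y. q x y * f y)) \<and>
        sq_integrable M (int_op M q f) \<and>
        (\<integral>x. (int_op M q f x)\<^sup>2 \<partial>M) \<le> C * (\<integral>x. (f x)\<^sup>2 \<partial>M)) \<and>
     (\<forall>f. sq_integrable M f \<longrightarrow> (\<integral>x. f x * int_op M q f x \<partial>M) \<ge> 0)"

text \<open>K = (sqrt K)^2 locally of trace class: Tr(P_L K P_L) = int_L int_X q(x,y)^2 < infinity.\<close>
definition locally_trace_class_sqrt_kernel :: "'a::topological_space measure \<Rightarrow> ('a \<Rightarrow> 'a \<Rightarrow> real) \<Rightarrow> bool" where
  "locally_trace_class_sqrt_kernel M q \<longleftrightarrow>
     (\<forall>L\<in>rel_compact_borel. (\<integral>\<^sup>+x. indicator L x * (\<integral>\<^sup>+y. ennreal ((q x y)\<^sup>2) \<partial>M) \<partial>M) < \<infinity>)"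

definition square_kernel :: "'a measure \<Rightarrow> ('a \<Rightarrow> 'a \<Rightarrow> real) \<Rightarrow> 'a \<Rightarrow> 'a \<Rightarrow> real" where
  "square_kernel M q x y = (\<integral>z. q x z * q y z \<partial>M)"

definition centered_gaussian :: "'b measure \<Rightarrow> ('b \<Rightarrow> real) \<Rightarrow> bool" where
  "centered_gaussian P Z \<longleftrightarrow> Z \<in> borel_measurable P \<and>
     (\<exists>\<sigma>\<ge>0. distr P borel Z =
        (if \<sigma> = 0 then return borel 0 else density lborel (normal_density 0 \<sigma>)))"

end

theory Submission
  imports Defs
begin

text \<open>Let \<open>e\<^sub>n\<close> be an orthonormal basis of \<open>L\<^sup>2(\<nu>)\<close> (Gram-Schmidt applied to the indicators of a
  countable \<inter>-stable generator of the Borel sets consisting of sets of finite measure) and let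
  \<open>\<xi>\<^sub>n\<close> be independent standard normal variables. Put \<open>Y(x) = \<Sum>n. \<langle>\<kappa>(x,\<cdot>), e\<^sub>n\<rangle> \<xi>\<^sub>n\<close>; local
  trace class makes \<open>\<kappa>(x,\<cdot>)\<close> square integrable for almost every \<open>x\<close>, so the coefficients are
  square summable. Summing along a fast subsequence of partial sums, the series converges almost
  surely, which makes \<open>Y\<close> jointly measurable and, via characteristic functions, each \<open>Y(x)\<close> a
  centered Gaussian. Finally \<open>E(Y(x) Y(y)) = \<Sum>n. \<langle>\<kappa>(x,\<cdot>), e\<^sub>n\<rangle> \<langle>\<kappa>(y,\<cdot>), e\<^sub>n\<rangle> = k(x,y)\<close> by
  Parseval's identity.\<close>

lemma sq_integrable_measurable [measurable_dest]: "sq_integrable M f \<Longrightarrow> f \<in> borel_measurable M"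
  by (simp add: sq_integrable_def)

lemma sq_integrable_integrable_square: "sq_integrable M f \<Longrightarrow> integrable M (\<lambda>x. (f x)\<^sup>2)"
  by (simp add: sq_integrable_def)

lemma integrable_mult_sq_integrable:
  assumes "sq_integrable M f" "sq_integrable M g"
  shows "integrable M (\<lambda>x. f x * g x)"
proof (rule Bochner_Integration.integrable_bound)
  show "integrable M (\<lambda>x. ((f x)\<^sup>2 + (g x)\<^sup>2) / 2)"
    using assms by (auto simp: sq_integrable_def)
  have "2 * \<bar>f x * g x\<bar> \<le> (f x)\<^sup>2 + (g x)\<^sup>2" for x
    using sum_squares_bound[of "\<bar>f x\<bar>" "\<bar>g x\<bar>"] by (simp add: abs_mult)
  then show "AE x in M. norm (f x * g x) \<le> norm (((f x)\<^sup>2 + (g x)\<^sup>2) / 2)"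
    by (intro AE_I2) (simp add: mult.commute)
qed (use assms in auto)

lemma sq_integrable_add:
  assumes "sq_integrable M f" "sq_integrable M g"
  shows "sq_integrable M (\<lambda>x. f x + g x)"
proof -
  have "integrable M (\<lambda>x. (f x)\<^sup>2 + 2 * (f x * g x) + (g x)\<^sup>2)"
    using assms integrable_mult_sq_integrable[OF assms] by (auto simp: sq_integrable_def)
  then show ?thesis
    using assms by (auto simp: sq_integrable_def power2_sum algebra_simps)
qed

lemma sq_integrable_cmult: "sq_integrable M f \<Longrightarrow> sq_integrable M (\<lambda>x. c * f x)"
  by (auto simp: sq_integrable_def power_mult_distrib)

lemma sq_integrable_diff:
  "sq_integrable M f \<Longrightarrow> sq_integrable M g \<Longrightarrow> sq_integrable M (\<lambda>x. f x - g x)"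
  using sq_integrable_add[of M f "\<lambda>x. - 1 * g x"] sq_integrable_cmult[of M g "- 1"] by simp

lemma sq_integrable_zero: "sq_integrable M (\<lambda>x. 0)"
  by (simp add: sq_integrable_def)

lemma sq_integrable_sum:
  "(\<And>i. i \<in> A \<Longrightarrow> sq_integrable M (f i)) \<Longrightarrow> sq_integrable M (\<lambda>x. \<Sum>i\<in>A. f i x)"
proof (induction A rule: infinite_finite_induct)
  case (insert a A)
  then show ?case using sq_integrable_add[of M "f a" "\<lambda>x. \<Sum>i\<in>A. f i x"] by simp
qed (auto simp: sq_integrable_zero)

lemma sq_integrable_indicator:
  assumes "A \<in> sets M" "emeasure M A < \<infinity>"
  shows "sq_integrable M (indicator A :: _ \<Rightarrow> real)"
proof -
  have "(\<lambda>x. (indicator A x :: real)\<^sup>2) = indicator A"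
    by (auto simp: indicator_def)
  then show ?thesis
    using assms by (auto simp: sq_integrable_def intro!: integrable_real_indicator)
qed

lemma nn_integral_square_eq_integral:
  "sq_integrable M f \<Longrightarrow> (\<integral>\<^sup>+x. ennreal ((f x)\<^sup>2) \<partial>M) = ennreal (\<integral>x. (f x)\<^sup>2 \<partial>M)"
  by (intro nn_integral_eq_integral) (auto simp: sq_integrable_def)

lemma integral_mult_square_le:
  assumes g: "sq_integrable M g" and h: "sq_integrable M h"
  shows "(\<integral>x. g x * h x \<partial>M)\<^sup>2 \<le> (\<integral>x. (g x)\<^sup>2 \<partial>M) * (\<integral>x. (h x)\<^sup>2 \<partial>M)"
proof -
  define A where "A = (\<integral>x. (g x)\<^sup>2 \<partial>M)"
  define B where "B = (\<integral>x. g x * h x \<partial>M)"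
  define C where "C = (\<integral>x. (h x)\<^sup>2 \<partial>M)"
  have quadratic_nonneg: "0 \<le> A + 2 * t * B + t\<^sup>2 * C" for t
  proof -
    have "0 \<le> (\<integral>x. (g x + t * h x)\<^sup>2 \<partial>M)" by simp
    also have "\<dots> = (\<integral>x. (g x)\<^sup>2 + (2 * t) * (g x * h x) + t\<^sup>2 * (h x)\<^sup>2 \<partial>M)"
      by (simp add: power2_sum power_mult_distrib algebra_simps)
    also have "\<dots> = A + 2 * t * B + t\<^sup>2 * C"
      using sq_integrable_integrable_square[OF g] sq_integrable_integrable_square[OF h]
        integrable_mult_sq_integrable[OF g h]
      unfolding A_def B_def C_def by simp
    finally show ?thesis .
  qed
  have "B\<^sup>2 \<le> A * C"
  proof (cases "C = 0")
    case True
    have "B = 0"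
    proof (rule ccontr)
      assume "B \<noteq> 0"
      then show False
        using quadratic_nonneg[of "- (A + 1) / (2 * B)"] True by (simp add: field_simps)
    qed
    then show ?thesis using True by simp
  next
    case False
    then have "C > 0" unfolding C_def by (simp add: less_le)
    then have "0 \<le> A - B\<^sup>2 / C"
      using quadratic_nonneg[of "- B / C"] by (simp add: field_simps power2_eq_square)
    then show ?thesis using \<open>C > 0\<close> by (simp add: field_simps)
  qed
  then show ?thesis unfolding A_def B_def C_def .
qed

lemma abs_integral_mult_le:
  "sq_integrable M g \<Longrightarrow> sq_integrable M h \<Longrightarrow>
    \<bar>\<integral>x. g x * h x \<partial>M\<bar> \<le> sqrt (\<integral>x. (g x)\<^sup>2 \<partial>M) * sqrt (\<integral>x. (h x)\<^sup>2 \<partial>M)"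
  using real_sqrt_le_mono[OF integral_mult_square_le] by (simp add: real_sqrt_mult)

lemma tendsto_integral_mult_L2:
  assumes g: "sq_integrable M g" and F: "sq_integrable M F" and S: "\<And>N. sq_integrable M (S N)"
    and L2: "\<And>e. e > 0 \<Longrightarrow> \<exists>N0. \<forall>N\<ge>N0. (\<integral>\<^sup>+x. ennreal ((F x - S N x)\<^sup>2) \<partial>M) \<le> ennreal e"
  shows "(\<lambda>N. \<integral>x. g x * S N x \<partial>M) \<longlonglongrightarrow> (\<integral>x. g x * F x \<partial>M)"
proof (rule LIMSEQ_I)
  fix r :: real assume r: "r > 0"
  define G where "G = sqrt (\<integral>x. (g x)\<^sup>2 \<partial>M)"
  have G: "G \<ge> 0" unfolding G_def by simp
  define e where "e = (r / (G + 1))\<^sup>2"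
  have e: "e > 0" unfolding e_def using r G by simp
  obtain N0 where N0: "\<And>N. N \<ge> N0 \<Longrightarrow> (\<integral>\<^sup>+x. ennreal ((F x - S N x)\<^sup>2) \<partial>M) \<le> ennreal e"
    using L2[OF e] by blast
  show "\<exists>no. \<forall>n\<ge>no. norm ((\<integral>x. g x * S n x \<partial>M) - (\<integral>x. g x * F x \<partial>M)) < r"
  proof (intro exI allI impI)
    fix N assume "N \<ge> N0"
    have diff: "sq_integrable M (\<lambda>x. F x - S N x)" by (rule sq_integrable_diff[OF F S])
    have "(\<integral>x. (F x - S N x)\<^sup>2 \<partial>M) \<le> e"
      using N0[OF \<open>N \<ge> N0\<close>] nn_integral_square_eq_integral[OF diff] e by (auto simp: ennreal_le_iff)
    then have small: "sqrt (\<integral>x. (F x - S N x)\<^sup>2 \<partial>M) \<le> r / (G + 1)"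
      using real_sqrt_le_mono r G unfolding e_def by fastforce
    have "(\<integral>x. g x * S N x \<partial>M) - (\<integral>x. g x * F x \<partial>M) = - (\<integral>x. g x * (F x - S N x) \<partial>M)"
      using integrable_mult_sq_integrable[OF g F] integrable_mult_sq_integrable[OF g S[of N]]
      by (simp add: algebra_simps)
    then have "norm ((\<integral>x. g x * S N x \<partial>M) - (\<integral>x. g x * F x \<partial>M)) \<le> G * sqrt (\<integral>x. (F x - S N x)\<^sup>2 \<partial>M)"
      using abs_integral_mult_le[OF g diff] unfolding G_def by simp
    also have "\<dots> \<le> G * (r / (G + 1))" using G small by (rule mult_left_mono[rotated])
    also have "\<dots> < r" using r G by (simp add: field_simps)
    finally show "norm ((\<integral>x. g x * S N x \<partial>M) - (\<integral>x. g x * F x \<partial>M)) < r" .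
  qed
qed

definition partial_series :: "(nat \<Rightarrow> real) \<Rightarrow> (nat \<Rightarrow> 'b \<Rightarrow> real) \<Rightarrow> nat \<Rightarrow> 'b \<Rightarrow> real" where
  "partial_series a f N x = (\<Sum>n<N. a n * f n x)"

definition block_index :: "(nat \<Rightarrow> real) \<Rightarrow> nat \<Rightarrow> nat" where
  "block_index a j = (LEAST N. \<forall>m. (\<Sum>n\<in>{N..<m}. (a n)\<^sup>2) \<le> (1/16)^j)"

text \<open>The series \<open>\<Sum>n. a n * f n\<close> is summed along the indices \<open>block_index a j\<close>, where its
  \<open>L\<^sup>2\<close>-increments are at most \<open>4\<^sup>-\<^sup>j\<close>. Along this subsequence it converges almost everywhere,
  so \<open>series_limit\<close> is a pointwise defined, measurable representative of the \<open>L\<^sup>2\<close>-sum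
  (on the null set of divergence \<open>lim\<close> yields an unspecified value).\<close>
definition series_limit :: "(nat \<Rightarrow> real) \<Rightarrow> (nat \<Rightarrow> 'b \<Rightarrow> real) \<Rightarrow> 'b \<Rightarrow> real" where
  "series_limit a f x = lim (\<lambda>j. partial_series a f (block_index a j) x)"

lemma summable_tail_sum_le:
  assumes "summable (\<lambda>n. (a n)\<^sup>2)" "(r::real) > 0"
  shows "\<exists>N0. \<forall>N\<ge>N0. \<forall>m. (\<Sum>n\<in>{N..<m}. (a n)\<^sup>2) \<le> r"
proof -
  obtain N0 where "\<forall>N\<ge>N0. \<forall>m. norm (\<Sum>n\<in>{N..<m}. (a n)\<^sup>2) < r"
    using assms unfolding summable_Cauchy by blast
  then show ?thesis
    unfolding real_norm_def by (blast intro: order_trans[OF abs_ge_self less_imp_le])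
qed

lemma tail_sum_block_index_le:
  assumes "summable (\<lambda>n. (a n)\<^sup>2)"
  shows "(\<Sum>n\<in>{block_index a j..<m}. (a n)\<^sup>2) \<le> (1/16)^j"
proof -
  obtain N0 where "\<forall>m. (\<Sum>n\<in>{N0..<m}. (a n)\<^sup>2) \<le> (1/16)^j"
    using summable_tail_sum_le[OF assms, of "(1/16)^j"] by auto
  then have "\<forall>m. (\<Sum>n\<in>{block_index a j..<m}. (a n)\<^sup>2) \<le> (1/16)^j"
    unfolding block_index_def by (rule LeastI)
  then show ?thesis by blast
qed

lemma block_index_mono:
  assumes "summable (\<lambda>n. (a n)\<^sup>2)"
  shows "block_index a j \<le> block_index a (Suc j)"
proof -
  have "(\<Sum>n\<in>{block_index a (Suc j)..<m}. (a n)\<^sup>2) \<le> (1/16)^j" for m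
    by (rule order_trans[OF tail_sum_block_index_le[OF assms]]) (simp add: power_decreasing)
  then show ?thesis unfolding block_index_def[of a j] by (intro Least_le allI)
qed

lemma sum_le_sum_block_index:
  assumes "summable (\<lambda>n. (a n)\<^sup>2)"
  shows "(\<Sum>n<m. (a n)\<^sup>2) \<le> (\<Sum>n<block_index a j. (a n)\<^sup>2) + (1/16)^j"
proof (cases "m \<le> block_index a j")
  case True
  then show ?thesis by (simp add: add_increasing2 sum_mono2)
next
  case False
  then show ?thesis
    using sum.atLeastLessThan_concat[of 0 "block_index a j" m "\<lambda>n. (a n)\<^sup>2"]
      tail_sum_block_index_le[OF assms, of j m]
    by (simp add: atLeast0LessThan)
qed

lemma tendsto_sum_block_index:
  assumes sa: "summable (\<lambda>n. (a n)\<^sup>2)"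
  shows "(\<lambda>j. \<Sum>n<block_index a j. (a n)\<^sup>2) \<longlonglongrightarrow> (\<Sum>n. (a n)\<^sup>2)"
proof (rule tendsto_sandwich[where f = "\<lambda>j. (\<Sum>n. (a n)\<^sup>2) - (1/16)^j" and h = "\<lambda>j. \<Sum>n. (a n)\<^sup>2"])
  have "(\<Sum>n. (a n)\<^sup>2) \<le> (\<Sum>n<block_index a j. (a n)\<^sup>2) + (1/16)^j" for j
    by (intro LIMSEQ_le_const2[OF summable_LIMSEQ[OF sa]]) (auto intro: sum_le_sum_block_index[OF sa])
  then show "\<forall>\<^sub>F j in sequentially. (\<Sum>n. (a n)\<^sup>2) - (1/16)^j \<le> (\<Sum>n<block_index a j. (a n)\<^sup>2)"
    by (intro always_eventually) (simp add: algebra_simps)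
  show "\<forall>\<^sub>F j in sequentially. (\<Sum>n<block_index a j. (a n)\<^sup>2) \<le> (\<Sum>n. (a n)\<^sup>2)"
    by (intro always_eventually allI sum_le_suminf[OF sa]) auto
  have "(\<lambda>j. (\<Sum>n. (a n)\<^sup>2) - (1/16::real)^j) \<longlonglongrightarrow> (\<Sum>n. (a n)\<^sup>2) - 0"
    by (intro tendsto_diff tendsto_const LIMSEQ_power_zero) auto
  then show "(\<lambda>j. (\<Sum>n. (a n)\<^sup>2) - (1/16::real)^j) \<longlonglongrightarrow> (\<Sum>n. (a n)\<^sup>2)" by simp
qed auto

lemma partial_series_diff:
  "N \<le> N' \<Longrightarrow> partial_series a f N' x - partial_series a f N x = (\<Sum>n\<in>{N..<N'}. a n * f n x)"
  unfolding partial_series_def by (simp add: sum_diff_nat_ivl[of 0, simplified atLeast0LessThan])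

lemma summable_if_summable_4_power_mult_square:
  fixes D :: "nat \<Rightarrow> real"
  assumes summable: "summable (\<lambda>j. 4^j * (D j)\<^sup>2)"
  shows "summable D"
proof -
  define C where "C = (\<Sum>j. 4^j * (D j)\<^sup>2)"
  have "(2^j * \<bar>D j\<bar>)\<^sup>2 = 4^j * (D j)\<^sup>2" for j
    using power_mult_distrib[of "2::real" 2 j] by (simp add: power2_eq_square)
  then have "(2^j * \<bar>D j\<bar>)\<^sup>2 \<le> C" for j
    using sum_le_suminf[OF summable, of "{j}"] by (simp add: C_def)
  then have "\<bar>D j\<bar> \<le> sqrt C * (1/2)^j" for j
    using real_le_rsqrt by (force simp: field_simps power_divide)
  then show ?thesis
    by (intro summable_comparison_test'[where N = 0, OF summable_mult[OF summable_geometric]]) auto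
qed

lemma convergent_if_summable_diff:
  fixes s :: "nat \<Rightarrow> real"
  assumes "summable (\<lambda>j. s (Suc j) - s j)"
  shows "convergent s"
proof -
  have "(\<lambda>m. (\<Sum>j<m. s (Suc j) - s j) + s 0) \<longlonglongrightarrow> (\<Sum>j. s (Suc j) - s j) + s 0"
    by (intro tendsto_add summable_LIMSEQ assms tendsto_const)
  then show ?thesis
    by (auto simp: sum_lessThan_telescope convergent_def)
qed

locale orthogonal_system =
  fixes M :: "'b measure" and f :: "nat \<Rightarrow> 'b \<Rightarrow> real"
  assumes sq_integrable: "\<And>n. sq_integrable M (f n)"
    and orthogonal: "\<And>n m. n \<noteq> m \<Longrightarrow> (\<integral>x. f n x * f m x \<partial>M) = 0"
    and norm_le_1: "\<And>n. (\<integral>x. (f n x)\<^sup>2 \<partial>M) \<le> 1"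
begin

lemma measurable [measurable]: "f n \<in> borel_measurable M"
  using sq_integrable by (rule sq_integrable_measurable)

lemma integral_square_sum:
  assumes "finite A"
  shows "(\<integral>x. (\<Sum>n\<in>A. a n * f n x)\<^sup>2 \<partial>M) = (\<Sum>n\<in>A. (a n)\<^sup>2 * (\<integral>x. (f n x)\<^sup>2 \<partial>M))"
proof -
  have "(\<integral>x. (\<Sum>n\<in>A. a n * f n x)\<^sup>2 \<partial>M)
      = (\<integral>x. (\<Sum>n\<in>A. \<Sum>m\<in>A. a n * a m * (f n x * f m x)) \<partial>M)"
    by (simp add: power2_eq_square sum_product algebra_simps)
  also have "\<dots> = (\<Sum>n\<in>A. \<Sum>m\<in>A. a n * a m * (\<integral>x. f n x * f m x \<partial>M))"
    by (simp add: integrable_mult_sq_integrable[OF sq_integrable sq_integrable] integrable_sum)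
  also have "\<dots> = (\<Sum>n\<in>A. a n * a n * (\<integral>x. f n x * f n x \<partial>M))"
  proof (rule sum.cong[OF refl])
    fix n assume "n \<in> A"
    have "(\<Sum>m\<in>A. a n * a m * (\<integral>x. f n x * f m x \<partial>M))
        = (\<Sum>m\<in>A. if m = n then a n * a m * (\<integral>x. f n x * f m x \<partial>M) else 0)"
      by (rule sum.cong) (auto simp: orthogonal)
    then show "(\<Sum>m\<in>A. a n * a m * (\<integral>x. f n x * f m x \<partial>M)) = a n * a n * (\<integral>x. f n x * f n x \<partial>M)"
      using \<open>n \<in> A\<close> assms by (simp add: sum.delta')
  qed
  finally show ?thesis by (simp add: power2_eq_square)
qed

lemma nn_integral_square_sum_le:
  assumes "finite A"
  shows "(\<integral>\<^sup>+x. ennreal ((\<Sum>n\<in>A. a n * f n x)\<^sup>2) \<partial>M) \<le> ennreal (\<Sum>n\<in>A. (a n)\<^sup>2)"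
proof -
  have "sq_integrable M (\<lambda>x. \<Sum>n\<in>A. a n * f n x)"
    by (intro sq_integrable_sum sq_integrable_cmult sq_integrable)
  moreover have "(\<integral>x. (\<Sum>n\<in>A. a n * f n x)\<^sup>2 \<partial>M) \<le> (\<Sum>n\<in>A. (a n)\<^sup>2)"
    unfolding integral_square_sum[OF assms] by (intro sum_mono) (simp add: mult_left_le norm_le_1)
  ultimately show ?thesis by (simp add: nn_integral_square_eq_integral ennreal_leI)
qed

lemma nn_integral_square_partial_series_diff_le:
  assumes "N \<le> N'"
  shows "(\<integral>\<^sup>+x. ennreal ((partial_series a f N' x - partial_series a f N x)\<^sup>2) \<partial>M)
    \<le> ennreal (\<Sum>n\<in>{N..<N'}. (a n)\<^sup>2)"
  using nn_integral_square_sum_le[of "{N..<N'}" a] by (simp add: partial_series_diff[OF assms])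

lemma partial_series_measurable [measurable]: "partial_series a f N \<in> borel_measurable M"
  unfolding partial_series_def by measurable

lemma series_limit_measurable [measurable]: "series_limit a f \<in> borel_measurable M"
  unfolding series_limit_def by measurable

lemma partial_series_sq_integrable: "sq_integrable M (partial_series a f N)"
  unfolding partial_series_def by (intro sq_integrable_sum sq_integrable_cmult sq_integrable)

text \<open>Block \<open>j\<close> has squared \<open>L\<^sup>2\<close>-norm at most \<open>16\<^sup>-\<^sup>j\<close>, so \<open>\<Sum>j. 4\<^sup>j * block\<^sub>j\<^sup>2\<close> is integrable,
  hence finite almost everywhere.\<close>
lemma AE_summable_4_power_mult_square_block:
  assumes sa: "summable (\<lambda>n. (a n)\<^sup>2)"
  defines "D j x \<equiv> partial_series a f (block_index a (Suc j)) x - partial_series a f (block_index a j) x"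
  shows "AE x in M. summable (\<lambda>j. 4^j * (D j x)\<^sup>2)"
proof -
  have [measurable]: "D j \<in> borel_measurable M" for j unfolding D_def by measurable
  have "(\<integral>\<^sup>+x. (\<Sum>j. ennreal (4^j * (D j x)\<^sup>2)) \<partial>M) = (\<Sum>j. \<integral>\<^sup>+x. ennreal (4^j * (D j x)\<^sup>2) \<partial>M)"
    by (rule nn_integral_suminf) measurable
  also have "\<dots> \<le> (\<Sum>j. ennreal ((1/4)^j))"
  proof (intro suminf_le)
    fix j
    have "(\<integral>\<^sup>+x. ennreal ((D j x)\<^sup>2) \<partial>M) \<le> ennreal ((1/16)^j)"
      unfolding D_def using block_index_mono[OF sa] tail_sum_block_index_le[OF sa]
      by (blast intro: order_trans nn_integral_square_partial_series_diff_le ennreal_leI)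
    then have "(\<integral>\<^sup>+x. ennreal (4^j * (D j x)\<^sup>2) \<partial>M) \<le> ennreal (4^j) * ennreal ((1/16)^j)"
      by (simp add: ennreal_mult nn_integral_cmult mult_left_mono)
    also have "\<dots> = ennreal ((1/4)^j)"
      by (simp add: ennreal_mult[symmetric] power_mult_distrib[symmetric])
    finally show "(\<integral>\<^sup>+x. ennreal (4^j * (D j x)\<^sup>2) \<partial>M) \<le> ennreal ((1/4)^j)" .
  qed auto
  also have "\<dots> = ennreal (\<Sum>j. (1/4)^j)"
    by (rule suminf_ennreal2) auto
  finally have "(\<integral>\<^sup>+x. (\<Sum>j. ennreal (4^j * (D j x)\<^sup>2)) \<partial>M) \<noteq> \<infinity>"
    by (auto simp: top_unique)
  then have "AE x in M. (\<Sum>j. ennreal (4^j * (D j x)\<^sup>2)) \<noteq> \<infinity>"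
    by (intro nn_integral_PInf_AE) measurable
  then show ?thesis
    by (rule AE_mp) (auto intro!: AE_I2 summable_suminf_not_top)
qed

lemma AE_partial_series_tendsto:
  assumes sa: "summable (\<lambda>n. (a n)\<^sup>2)"
  shows "AE x in M. (\<lambda>j. partial_series a f (block_index a j) x) \<longlonglongrightarrow> series_limit a f x"
  using AE_summable_4_power_mult_square_block[OF sa]
proof (rule AE_mp, intro AE_I2 impI)
  fix x
  assume "summable (\<lambda>j. 4^j * (partial_series a f (block_index a (Suc j)) x
      - partial_series a f (block_index a j) x)\<^sup>2)"
  then have "convergent (\<lambda>j. partial_series a f (block_index a j) x)"
    by (rule convergent_if_summable_diff[OF summable_if_summable_4_power_mult_square])
  then show "(\<lambda>j. partial_series a f (block_index a j) x) \<longlonglongrightarrow> series_limit a f x"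
    unfolding series_limit_def by (simp add: convergent_LIMSEQ_iff)
qed

lemma nn_integral_square_partial_series_dist_le:
  "(\<integral>\<^sup>+x. ennreal ((partial_series a f N' x - partial_series a f N x)\<^sup>2) \<partial>M)
    \<le> ennreal (\<Sum>n\<in>{min N N'..<max N N'}. (a n)\<^sup>2)"
proof (cases "N \<le> N'")
  case False
  then show ?thesis
    using nn_integral_square_partial_series_diff_le[of N' N a] by (simp add: power2_commute)
qed (simp add: nn_integral_square_partial_series_diff_le)

lemma series_limit_L2:
  assumes sa: "summable (\<lambda>n. (a n)\<^sup>2)" and e: "e > 0"
  shows "\<exists>N0. \<forall>N\<ge>N0. (\<integral>\<^sup>+x. ennreal ((series_limit a f x - partial_series a f N x)\<^sup>2) \<partial>M) \<le> ennreal e"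
proof -
  obtain N0 where N0: "\<And>N m. N \<ge> N0 \<Longrightarrow> (\<Sum>n\<in>{N..<m}. (a n)\<^sup>2) \<le> e"
    using summable_tail_sum_le[OF sa e] by blast
  obtain J where J: "(1/16::real)^J < e"
    using real_arch_pow_inv[OF e, of "1/16"] by auto
  show ?thesis
  proof (intro exI allI impI)
    fix N assume N: "N \<ge> N0"
    have block_close: "(\<integral>\<^sup>+x. ennreal ((partial_series a f (block_index a j) x - partial_series a f N x)\<^sup>2) \<partial>M)
        \<le> ennreal e" if "j \<ge> J" for j
    proof -
      have "(1/16::real)^j \<le> (1/16)^J" using that by (simp add: power_decreasing)
      then have "(\<Sum>n\<in>{block_index a j..<m}. (a n)\<^sup>2) \<le> e" for m
        using tail_sum_block_index_le[OF sa, of j m] J by linarith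
      then have "(\<Sum>n\<in>{min N (block_index a j)..<max N (block_index a j)}. (a n)\<^sup>2) \<le> e"
        using N0[OF N] by (cases "N \<le> block_index a j") (auto simp: min_def max_def)
      then show ?thesis
        by (rule order_trans[OF nn_integral_square_partial_series_dist_le ennreal_leI])
    qed
    have "(\<integral>\<^sup>+x. ennreal ((series_limit a f x - partial_series a f N x)\<^sup>2) \<partial>M)
        = (\<integral>\<^sup>+x. liminf (\<lambda>j. ennreal ((partial_series a f (block_index a j) x - partial_series a f N x)\<^sup>2)) \<partial>M)"
    proof (rule nn_integral_cong_AE)
      show "AE x in M. ennreal ((series_limit a f x - partial_series a f N x)\<^sup>2)
          = liminf (\<lambda>j. ennreal ((partial_series a f (block_index a j) x - partial_series a f N x)\<^sup>2))"
        using AE_partial_series_tendsto[OF sa]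
      proof (rule AE_mp, intro AE_I2 impI)
        fix x assume "(\<lambda>j. partial_series a f (block_index a j) x) \<longlonglongrightarrow> series_limit a f x"
        then have "(\<lambda>j. ennreal ((partial_series a f (block_index a j) x - partial_series a f N x)\<^sup>2))
            \<longlonglongrightarrow> ennreal ((series_limit a f x - partial_series a f N x)\<^sup>2)"
          by (intro tendsto_ennrealI tendsto_intros)
        then show "ennreal ((series_limit a f x - partial_series a f N x)\<^sup>2)
            = liminf (\<lambda>j. ennreal ((partial_series a f (block_index a j) x - partial_series a f N x)\<^sup>2))"
          using lim_imp_Liminf[OF trivial_limit_sequentially] by metis
      qed
    qed
    also have "\<dots> \<le> liminf (\<lambda>j. \<integral>\<^sup>+x. ennreal ((partial_series a f (block_index a j) x - partial_series a f N x)\<^sup>2) \<partial>M)"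
      by (rule nn_integral_liminf) measurable
    also have "\<dots> \<le> ennreal e"
      by (intro Liminf_le) (auto intro!: eventually_sequentiallyI[of J] block_close)
    finally show "(\<integral>\<^sup>+x. ennreal ((series_limit a f x - partial_series a f N x)\<^sup>2) \<partial>M) \<le> ennreal e" .
  qed
qed

lemma series_limit_sq_integrable:
  assumes sa: "summable (\<lambda>n. (a n)\<^sup>2)"
  shows "sq_integrable M (series_limit a f)"
proof -
  obtain N where N: "(\<integral>\<^sup>+x. ennreal ((series_limit a f x - partial_series a f N x)\<^sup>2) \<partial>M) \<le> ennreal 1"
    using series_limit_L2[OF sa, of 1] by auto
  have "ennreal ((series_limit a f x)\<^sup>2)
      \<le> 2 * ennreal ((series_limit a f x - partial_series a f N x)\<^sup>2) + 2 * ennreal ((partial_series a f N x)\<^sup>2)" for x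
  proof -
    have "(series_limit a f x)\<^sup>2 \<le> 2 * (series_limit a f x - partial_series a f N x)\<^sup>2 + 2 * (partial_series a f N x)\<^sup>2"
      using zero_le_power2[of "series_limit a f x - 2 * partial_series a f N x"]
      by (simp add: power2_eq_square algebra_simps)
    then have "ennreal ((series_limit a f x)\<^sup>2)
        \<le> ennreal (2 * (series_limit a f x - partial_series a f N x)\<^sup>2 + 2 * (partial_series a f N x)\<^sup>2)"
      by (rule ennreal_leI)
    then show ?thesis by (simp add: ennreal_plus ennreal_mult)
  qed
  then have "(\<integral>\<^sup>+x. ennreal ((series_limit a f x)\<^sup>2) \<partial>M)
      \<le> 2 * (\<integral>\<^sup>+x. ennreal ((series_limit a f x - partial_series a f N x)\<^sup>2) \<partial>M)
        + 2 * (\<integral>\<^sup>+x. ennreal ((partial_series a f N x)\<^sup>2) \<partial>M)"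
    by (subst nn_integral_cmult[symmetric] nn_integral_add[symmetric], simp_all)+ (rule nn_integral_mono)
  also have "\<dots> < \<infinity>"
    using le_less_trans[OF N ennreal_less_top]
      nn_integral_square_eq_integral[OF partial_series_sq_integrable[of a N]]
    by (simp add: ennreal_mult_less_top)
  finally show ?thesis
    unfolding sq_integrable_def by (auto intro!: integrableI_nonneg)
qed

lemma integral_mult_series_limit:
  assumes sa: "summable (\<lambda>n. (a n)\<^sup>2)" and normalized: "a m * (\<integral>z. (f m z)\<^sup>2 \<partial>M) = a m"
  shows "(\<integral>z. f m z * series_limit a f z \<partial>M) = a m"
proof -
  have "(\<integral>z. f m z * partial_series a f N z \<partial>M) = a m" if "N > m" for N
  proof -
    have "(\<integral>z. f m z * partial_series a f N z \<partial>M) = (\<integral>z. (\<Sum>n<N. a n * (f m z * f n z)) \<partial>M)"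
      unfolding partial_series_def by (simp add: sum_distrib_left mult_ac)
    also have "\<dots> = (\<Sum>n<N. a n * (\<integral>z. f m z * f n z \<partial>M))"
      by (simp add: integrable_mult_sq_integrable[OF sq_integrable sq_integrable])
    also have "\<dots> = (\<Sum>n<N. if n = m then a m * (\<integral>z. f m z * f m z \<partial>M) else 0)"
      by (rule sum.cong) (auto simp: orthogonal)
    also have "\<dots> = a m" using that normalized by (simp add: power2_eq_square)
    finally show ?thesis .
  qed
  then have "(\<lambda>N. \<integral>z. f m z * partial_series a f N z \<partial>M) \<longlonglongrightarrow> a m"
    by (intro tendsto_eventually eventually_sequentiallyI[of "Suc m"]) auto
  moreover have "(\<lambda>N. \<integral>z. f m z * partial_series a f N z \<partial>M) \<longlonglongrightarrow> (\<integral>z. f m z * series_limit a f z \<partial>M)"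
    by (intro tendsto_integral_mult_L2 sq_integrable series_limit_sq_integrable[OF sa]
        partial_series_sq_integrable series_limit_L2[OF sa])
  ultimately show ?thesis using LIMSEQ_unique by blast
qed

lemma integral_series_limit_mult_sums:
  assumes sa: "summable (\<lambda>n. (a n)\<^sup>2)" and sb: "summable (\<lambda>n. (b n)\<^sup>2)"
    and normalized: "\<And>m. (\<integral>z. (f m z)\<^sup>2 \<partial>M) = 1"
  shows "(\<lambda>n. a n * b n) sums (\<integral>z. series_limit a f z * series_limit b f z \<partial>M)"
proof -
  have "(\<integral>z. series_limit a f z * partial_series b f N z \<partial>M) = (\<Sum>n<N. a n * b n)" for N
  proof -
    have "(\<integral>z. series_limit a f z * partial_series b f N z \<partial>M)
        = (\<integral>z. (\<Sum>n<N. b n * (f n z * series_limit a f z)) \<partial>M)"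
      unfolding partial_series_def by (simp add: sum_distrib_left mult_ac)
    also have "\<dots> = (\<Sum>n<N. b n * (\<integral>z. f n z * series_limit a f z \<partial>M))"
      by (simp add: integrable_mult_sq_integrable[OF sq_integrable series_limit_sq_integrable[OF sa]])
    also have "\<dots> = (\<Sum>n<N. a n * b n)"
      by (simp add: integral_mult_series_limit[OF sa] normalized mult.commute)
    finally show ?thesis .
  qed
  moreover have "(\<lambda>N. \<integral>z. series_limit a f z * partial_series b f N z \<partial>M)
      \<longlonglongrightarrow> (\<integral>z. series_limit a f z * series_limit b f z \<partial>M)"
    by (intro tendsto_integral_mult_L2 series_limit_sq_integrable sa sb
        partial_series_sq_integrable series_limit_L2[OF sb])
  ultimately show ?thesis unfolding sums_def by simp
qed

end

lemma measurable_series_limit_param: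
  assumes [measurable]: "\<And>n. (\<lambda>x. a x n) \<in> borel_measurable N" "\<And>n. f n \<in> borel_measurable P"
  shows "(\<lambda>(x, \<omega>). series_limit (a x) f \<omega>) \<in> borel_measurable (N \<Otimes>\<^sub>M P)"
proof -
  have [measurable]: "(\<lambda>p. block_index (a (fst p)) j) \<in> measurable (N \<Otimes>\<^sub>M P) (count_space UNIV)" for j
    unfolding block_index_def by measurable
  have "(\<lambda>p. partial_series (a (fst p)) f (block_index (a (fst p)) j) (snd p)) \<in> borel_measurable (N \<Otimes>\<^sub>M P)" for j
    by (rule measurable_compose_countable'[where I = UNIV and g = "\<lambda>p. block_index (a (fst p)) j"])
      (auto simp: partial_series_def)
  then have "(\<lambda>p. lim (\<lambda>j. partial_series (a (fst p)) f (block_index (a (fst p)) j) (snd p)))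
      \<in> borel_measurable (N \<Otimes>\<^sub>M P)"
    by (rule borel_measurable_lim_metric)
  then show ?thesis by (simp add: series_limit_def case_prod_beta')
qed

text \<open>Residuals of norm zero are replaced by \<open>0\<close> rather than normalized, so Gram-Schmidt
  produces vectors that are of norm one or identically zero.\<close>
definition unit_or_zero :: "'b measure \<Rightarrow> ('b \<Rightarrow> real) \<Rightarrow> bool" where
  "unit_or_zero M g \<longleftrightarrow> g = (\<lambda>z. 0) \<or> (\<integral>z. (g z)\<^sup>2 \<partial>M) = 1"

definition L2_normalize :: "'b measure \<Rightarrow> ('b \<Rightarrow> real) \<Rightarrow> 'b \<Rightarrow> real" where
  "L2_normalize M r =
    (if (\<integral>z. (r z)\<^sup>2 \<partial>M) = 0 then (\<lambda>z. 0) else (\<lambda>z. r z / sqrt (\<integral>z. (r z)\<^sup>2 \<partial>M)))"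

definition orthogonal_residual ::
    "'b measure \<Rightarrow> ('b \<Rightarrow> real) \<Rightarrow> (nat \<Rightarrow> 'b \<Rightarrow> real) \<Rightarrow> nat \<Rightarrow> 'b \<Rightarrow> real" where
  "orthogonal_residual M v e n z = v z - (\<Sum>m<n. (\<integral>y. v y * e m y \<partial>M) * e m z)"

fun gram_schmidt_list :: "'b measure \<Rightarrow> (nat \<Rightarrow> 'b \<Rightarrow> real) \<Rightarrow> nat \<Rightarrow> ('b \<Rightarrow> real) list" where
  "gram_schmidt_list M d 0 = []"
| "gram_schmidt_list M d (Suc n) = gram_schmidt_list M d n @
     [L2_normalize M (orthogonal_residual M (d n) ((!) (gram_schmidt_list M d n)) n)]"

definition gram_schmidt :: "'b measure \<Rightarrow> (nat \<Rightarrow> 'b \<Rightarrow> real) \<Rightarrow> nat \<Rightarrow> 'b \<Rightarrow> real" where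
  "gram_schmidt M d n = gram_schmidt_list M d (Suc n) ! n"

lemma length_gram_schmidt_list [simp]: "length (gram_schmidt_list M d n) = n"
  by (induction n) auto

lemma nth_gram_schmidt_list: "m < n \<Longrightarrow> gram_schmidt_list M d n ! m = gram_schmidt M d m"
proof (induction n)
  case (Suc n)
  then show ?case by (cases "m = n") (auto simp: gram_schmidt_def nth_append)
qed simp

lemma gram_schmidt_eq:
  "gram_schmidt M d n = L2_normalize M (orthogonal_residual M (d n) (gram_schmidt M d) n)"
proof -
  have "orthogonal_residual M (d n) ((!) (gram_schmidt_list M d n)) n
      = orthogonal_residual M (d n) (gram_schmidt M d) n"
    by (auto simp: orthogonal_residual_def nth_gram_schmidt_list intro!: sum.cong ext)
  then show ?thesis by (simp add: gram_schmidt_def nth_append)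
qed

lemma L2_normalize_sq_integrable:
  assumes "sq_integrable M r"
  shows "sq_integrable M (L2_normalize M r)" and "unit_or_zero M (L2_normalize M r)"
proof -
  have "(\<integral>z. (r z)\<^sup>2 \<partial>M) \<ge> 0" by simp
  then show "sq_integrable M (L2_normalize M r)" "unit_or_zero M (L2_normalize M r)"
    using sq_integrable_cmult[OF assms, of "1 / sqrt (\<integral>z. (r z)\<^sup>2 \<partial>M)"]
    by (auto simp: L2_normalize_def unit_or_zero_def sq_integrable_zero power_divide)
qed

lemma integral_L2_normalize_mult:
  "(\<integral>z. L2_normalize M r z * g z \<partial>M) = (\<integral>z. r z * g z \<partial>M) / sqrt (\<integral>z. (r z)\<^sup>2 \<partial>M)"
  by (simp add: L2_normalize_def)

lemma integral_mult_eq_0_if_L2_normalize: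
  assumes h: "sq_integrable M h" and r: "sq_integrable M r"
    and orth: "(\<integral>z. h z * L2_normalize M r z \<partial>M) = 0"
  shows "(\<integral>z. h z * r z \<partial>M) = 0"
proof (cases "(\<integral>z. (r z)\<^sup>2 \<partial>M) = 0")
  case True
  then have "AE z in M. (r z)\<^sup>2 = 0"
    using r by (subst integral_nonneg_eq_0_iff_AE[symmetric]) (auto simp: sq_integrable_def)
  then have "(\<integral>z. h z * r z \<partial>M) = (\<integral>z. 0 \<partial>M)"
    using h r by (intro integral_cong_AE) (auto simp: sq_integrable_def)
  then show ?thesis by simp
next
  case False
  then show ?thesis using orth integral_L2_normalize_mult[of M r h] by (simp add: mult.commute)
qed

lemma integral_orthogonal_residual_mult:
  assumes v: "sq_integrable M v" and e: "\<And>m. m < n \<Longrightarrow> sq_integrable M (e m)"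
    and unit: "\<And>m. m < n \<Longrightarrow> unit_or_zero M (e m)"
    and orth: "\<And>m l. m < n \<Longrightarrow> l < n \<Longrightarrow> m \<noteq> l \<Longrightarrow> (\<integral>z. e m z * e l z \<partial>M) = 0"
    and "k < n"
  shows "(\<integral>z. orthogonal_residual M v e n z * e k z \<partial>M) = 0"
proof -
  define \<alpha> where "\<alpha> m = (\<integral>y. v y * e m y \<partial>M)" for m
  have "(\<integral>z. orthogonal_residual M v e n z * e k z \<partial>M)
      = (\<integral>z. v z * e k z - (\<Sum>m<n. \<alpha> m * (e m z * e k z)) \<partial>M)"
    unfolding orthogonal_residual_def \<alpha>_def
    by (rule Bochner_Integration.integral_cong[OF refl]) (simp add: algebra_simps sum_distrib_left)
  also have "\<dots> = \<alpha> k - (\<Sum>m<n. \<alpha> m * (\<integral>z. e m z * e k z \<partial>M))"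
  proof -
    have int: "integrable M (\<lambda>z. \<alpha> m * (e m z * e k z))" if "m \<in> {..<n}" for m
      using that \<open>k < n\<close> by (auto intro: integrable_mult_sq_integrable e)
    have "(\<integral>z. v z * e k z - (\<Sum>m<n. \<alpha> m * (e m z * e k z)) \<partial>M)
        = (\<integral>z. v z * e k z \<partial>M) - (\<Sum>m<n. \<integral>z. \<alpha> m * (e m z * e k z) \<partial>M)"
      using integrable_mult_sq_integrable[OF v e[OF \<open>k < n\<close>]]
        Bochner_Integration.integrable_sum[of "{..<n}" M "\<lambda>m z. \<alpha> m * (e m z * e k z)", OF int]
        Bochner_Integration.integral_sum[of "{..<n}" M "\<lambda>m z. \<alpha> m * (e m z * e k z)", OF int]
      by simp
    then show ?thesis by (simp add: \<alpha>_def)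
  qed
  also have "(\<Sum>m<n. \<alpha> m * (\<integral>z. e m z * e k z \<partial>M)) = \<alpha> k * (\<integral>z. (e k z)\<^sup>2 \<partial>M)"
    using \<open>k < n\<close> by (subst sum.remove[of _ k]) (auto simp: orth power2_eq_square)
  also have "\<alpha> k - \<alpha> k * (\<integral>z. (e k z)\<^sup>2 \<partial>M) = 0"
    using unit[OF \<open>k < n\<close>] by (auto simp: unit_or_zero_def \<alpha>_def)
  finally show ?thesis .
qed

locale sq_integrable_sequence =
  fixes M :: "'b measure" and d :: "nat \<Rightarrow> 'b \<Rightarrow> real"
  assumes sq_integrable_d: "\<And>n. sq_integrable M (d n)"
begin

abbreviation "e \<equiv> gram_schmidt M d"

lemma sq_integrable_residual:
  "(\<And>m. m < n \<Longrightarrow> sq_integrable M (e m)) \<Longrightarrow> sq_integrable M (orthogonal_residual M (d n) e n)"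
  unfolding orthogonal_residual_def[abs_def]
  by (intro sq_integrable_diff sq_integrable_d sq_integrable_sum sq_integrable_cmult) auto

lemma gram_schmidt_invariant:
  "sq_integrable M (e n) \<and> unit_or_zero M (e n) \<and> (\<forall>k<n. (\<integral>z. e n z * e k z \<partial>M) = 0)"
proof (induction n rule: less_induct)
  case (less n)
  have e: "\<And>m. m < n \<Longrightarrow> sq_integrable M (e m)"
    and unit: "\<And>m. m < n \<Longrightarrow> unit_or_zero M (e m)" using less by blast+
  have orth: "(\<integral>z. e m z * e l z \<partial>M) = 0" if "m < n" "l < n" "m \<noteq> l" for m l
  proof (cases "l < m")
    case True
    with less[OF that(1)] show ?thesis by blast
  next
    case False
    with that less[OF that(2)] have "(\<integral>z. e l z * e m z \<partial>M) = 0" by simp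
    then show ?thesis by (simp add: mult.commute)
  qed
  define r where "r = orthogonal_residual M (d n) e n"
  have en: "e n = L2_normalize M r" unfolding r_def by (rule gram_schmidt_eq)
  have r: "sq_integrable M r" unfolding r_def by (rule sq_integrable_residual[OF e])
  have "(\<integral>z. e n z * e k z \<partial>M) = 0" if "k < n" for k
    using integral_orthogonal_residual_mult[of M "d n" n e k, OF sq_integrable_d e unit orth that]
    unfolding en integral_L2_normalize_mult r_def by simp
  then show ?case using L2_normalize_sq_integrable[OF r] unfolding en by blast
qed

lemma gram_schmidt_sq_integrable: "sq_integrable M (e n)"
  using gram_schmidt_invariant by blast

lemma gram_schmidt_unit_or_zero: "unit_or_zero M (e n)"
  using gram_schmidt_invariant by blast

lemma gram_schmidt_orthogonal: "n \<noteq> m \<Longrightarrow> (\<integral>z. e n z * e m z \<partial>M) = 0"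
proof (cases "m < n")
  case False
  moreover assume "n \<noteq> m"
  ultimately have "(\<integral>z. e m z * e n z \<partial>M) = 0" using gram_schmidt_invariant[of m] by simp
  then show ?thesis by (simp add: mult.commute)
qed (use gram_schmidt_invariant in blast)

sublocale gs: orthogonal_system M e
proof
  show "(\<integral>z. (e n z)\<^sup>2 \<partial>M) \<le> 1" for n
    using gram_schmidt_unit_or_zero[of n] by (auto simp: unit_or_zero_def)
qed (use gram_schmidt_sq_integrable gram_schmidt_orthogonal in auto)

lemma integral_mult_eq_0_if_orthogonal_gram_schmidt:
  assumes h: "sq_integrable M h" and orth: "\<And>m. (\<integral>z. h z * e m z \<partial>M) = 0"
  shows "(\<integral>z. h z * d n z \<partial>M) = 0"
proof -
  define r where "r = orthogonal_residual M (d n) e n"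
  have r: "sq_integrable M r"
    unfolding r_def by (intro sq_integrable_residual gram_schmidt_sq_integrable)
  define \<alpha> where "\<alpha> m = (\<integral>y. d n y * e m y \<partial>M)" for m
  have "(\<integral>z. h z * d n z \<partial>M) = (\<integral>z. h z * r z + (\<Sum>m<n. \<alpha> m * (h z * e m z)) \<partial>M)"
    unfolding r_def orthogonal_residual_def \<alpha>_def by (simp add: algebra_simps sum_distrib_left)
  also have "\<dots> = (\<integral>z. h z * r z \<partial>M) + (\<Sum>m<n. \<alpha> m * (\<integral>z. h z * e m z \<partial>M))"
    using integrable_mult_sq_integrable[OF h r] integrable_mult_sq_integrable[OF h gram_schmidt_sq_integrable]
    by simp
  also have "\<dots> = 0"
    using integral_mult_eq_0_if_L2_normalize[OF h r] orth
    by (simp add: r_def flip: gram_schmidt_eq)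
  finally show ?thesis .
qed

end

locale total_sequence = sq_integrable_sequence +
  assumes total: "\<And>h. sq_integrable M h \<Longrightarrow> (\<And>n. (\<integral>z. h z * d n z \<partial>M) = 0) \<Longrightarrow> AE z in M. h z = 0"
begin

definition coef :: "('a \<Rightarrow> real) \<Rightarrow> nat \<Rightarrow> real" where
  "coef g n = (\<integral>z. g z * e n z \<partial>M)"

lemma coef_normalized: "coef g n * (\<integral>z. (e n z)\<^sup>2 \<partial>M) = coef g n"
  using gram_schmidt_unit_or_zero[of n] by (auto simp: coef_def unit_or_zero_def)

lemma integral_square_diff_partial_series_coef:
  assumes g: "sq_integrable M g"
  shows "(\<integral>z. (g z - partial_series (coef g) e N z)\<^sup>2 \<partial>M)
    = (\<integral>z. (g z)\<^sup>2 \<partial>M) - (\<Sum>n<N. (coef g n)\<^sup>2)"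
proof -
  define S where "S = partial_series (coef g) e N"
  have S: "sq_integrable M S" unfolding S_def by (rule gs.partial_series_sq_integrable)
  have "(\<integral>z. g z * S z \<partial>M) = (\<integral>z. (\<Sum>n<N. coef g n * (g z * e n z)) \<partial>M)"
    unfolding S_def partial_series_def by (simp add: sum_distrib_left mult_ac)
  also have "\<dots> = (\<Sum>n<N. (coef g n)\<^sup>2)"
    by (simp add: integrable_mult_sq_integrable[OF g gram_schmidt_sq_integrable] coef_def power2_eq_square)
  finally have inner: "(\<integral>z. g z * S z \<partial>M) = (\<Sum>n<N. (coef g n)\<^sup>2)" .
  have square_normalized: "(coef g n)\<^sup>2 * (\<integral>z. (e n z)\<^sup>2 \<partial>M) = (coef g n)\<^sup>2" for n
    by (metis coef_normalized mult.assoc power2_eq_square)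
  have norm: "(\<integral>z. (S z)\<^sup>2 \<partial>M) = (\<Sum>n<N. (coef g n)\<^sup>2)"
    by (simp add: S_def partial_series_def gs.integral_square_sum square_normalized)
  have "(\<integral>z. (g z - S z)\<^sup>2 \<partial>M) = (\<integral>z. (g z)\<^sup>2 - 2 * (g z * S z) + (S z)\<^sup>2 \<partial>M)"
    by (simp add: power2_diff algebra_simps)
  also have "\<dots> = (\<integral>z. (g z)\<^sup>2 \<partial>M) - 2 * (\<integral>z. g z * S z \<partial>M) + (\<integral>z. (S z)\<^sup>2 \<partial>M)"
    using g S integrable_mult_sq_integrable[OF g S] by (simp add: sq_integrable_def)
  finally show ?thesis using inner norm by (simp add: S_def)
qed

lemma sum_square_coef_le: "sq_integrable M g \<Longrightarrow> (\<Sum>n<N. (coef g n)\<^sup>2) \<le> (\<integral>z. (g z)\<^sup>2 \<partial>M)"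
  using integral_square_diff_partial_series_coef[of g N]
    integral_nonneg_AE[of "\<lambda>z. (g z - partial_series (coef g) e N z)\<^sup>2" M]
  by simp

lemma summable_square_coef: "sq_integrable M g \<Longrightarrow> summable (\<lambda>n. (coef g n)\<^sup>2)"
  by (rule summableI_nonneg_bounded[OF _ sum_square_coef_le]) auto

lemma AE_eq_series_limit_coef:
  assumes g: "sq_integrable M g"
  shows "AE z in M. g z = series_limit (coef g) e z"
proof -
  have summable: "summable (\<lambda>n. (coef g n)\<^sup>2)" by (rule summable_square_coef[OF g])
  have F: "sq_integrable M (series_limit (coef g) e)"
    by (rule gs.series_limit_sq_integrable[OF summable])
  have h: "sq_integrable M (\<lambda>z. g z - series_limit (coef g) e z)"
    by (rule sq_integrable_diff[OF g F])
  have "(\<integral>z. (g z - series_limit (coef g) e z) * e m z \<partial>M) = 0" for m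
  proof -
    have "(\<integral>z. (g z - series_limit (coef g) e z) * e m z \<partial>M)
        = (\<integral>z. g z * e m z - e m z * series_limit (coef g) e z \<partial>M)"
      by (simp add: algebra_simps)
    also have "\<dots> = coef g m - (\<integral>z. e m z * series_limit (coef g) e z \<partial>M)"
      using integrable_mult_sq_integrable[OF g gram_schmidt_sq_integrable]
        integrable_mult_sq_integrable[OF gram_schmidt_sq_integrable F]
      by (simp add: coef_def)
    finally have "(\<integral>z. (g z - series_limit (coef g) e z) * e m z \<partial>M)
        = coef g m - (\<integral>z. e m z * series_limit (coef g) e z \<partial>M)" .
    then show ?thesis
      by (simp add: gs.integral_mult_series_limit[OF summable coef_normalized])
  qed
  then have "AE z in M. g z - series_limit (coef g) e z = 0"
    by (intro total[OF h] integral_mult_eq_0_if_orthogonal_gram_schmidt[OF h])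
  then show ?thesis by auto
qed

lemma square_coef_sums:
  assumes g: "sq_integrable M g"
  shows "(\<lambda>n. (coef g n)\<^sup>2) sums (\<integral>z. (g z)\<^sup>2 \<partial>M)"
  unfolding sums_def
proof (rule LIMSEQ_I)
  fix r :: real assume r: "r > 0"
  have summable: "summable (\<lambda>n. (coef g n)\<^sup>2)" by (rule summable_square_coef[OF g])
  have F: "sq_integrable M (series_limit (coef g) e)"
    by (rule gs.series_limit_sq_integrable[OF summable])
  obtain N0 where N0: "\<forall>N\<ge>N0. (\<integral>\<^sup>+z. ennreal ((series_limit (coef g) e z - partial_series (coef g) e N z)\<^sup>2) \<partial>M)
      \<le> ennreal (r/2)"
    using gs.series_limit_L2[OF summable, of "r/2"] r by auto
  show "\<exists>no. \<forall>n\<ge>no. norm ((\<Sum>i<n. (coef g i)\<^sup>2) - (\<integral>z. (g z)\<^sup>2 \<partial>M)) < r"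
  proof (intro exI allI impI)
    fix N assume "N \<ge> N0"
    have diff: "sq_integrable M (\<lambda>z. series_limit (coef g) e z - partial_series (coef g) e N z)"
      by (rule sq_integrable_diff[OF F gs.partial_series_sq_integrable])
    have "(\<integral>z. (g z - partial_series (coef g) e N z)\<^sup>2 \<partial>M)
        = (\<integral>z. (series_limit (coef g) e z - partial_series (coef g) e N z)\<^sup>2 \<partial>M)"
      using AE_eq_series_limit_coef[OF g] g F by (intro integral_cong_AE) auto
    also have "\<dots> \<le> r/2"
      using N0 \<open>N \<ge> N0\<close> nn_integral_square_eq_integral[OF diff] r by (auto simp: ennreal_le_iff)
    finally show "norm ((\<Sum>i<N. (coef g i)\<^sup>2) - (\<integral>z. (g z)\<^sup>2 \<partial>M)) < r"
      using integral_square_diff_partial_series_coef[OF g, of N] sum_square_coef_le[OF g, of N] r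
      by simp
  qed
qed

lemma coef_add: "sq_integrable M g \<Longrightarrow> sq_integrable M h \<Longrightarrow> coef (\<lambda>z. g z + h z) n = coef g n + coef h n"
  unfolding coef_def
  using integrable_mult_sq_integrable[OF _ gram_schmidt_sq_integrable, of g n]
    integrable_mult_sq_integrable[OF _ gram_schmidt_sq_integrable, of h n]
  by (simp add: distrib_right)

lemma coef_diff: "sq_integrable M g \<Longrightarrow> sq_integrable M h \<Longrightarrow> coef (\<lambda>z. g z - h z) n = coef g n - coef h n"
  unfolding coef_def
  using integrable_mult_sq_integrable[OF _ gram_schmidt_sq_integrable, of g n]
    integrable_mult_sq_integrable[OF _ gram_schmidt_sq_integrable, of h n]
  by (simp add: left_diff_distrib)

text \<open>Parseval's identity for the inner product, by polarization.\<close>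
lemma coef_mult_sums:
  assumes g: "sq_integrable M g" and h: "sq_integrable M h"
  shows "(\<lambda>n. coef g n * coef h n) sums (\<integral>z. g z * h z \<partial>M)"
proof -
  have "(\<lambda>n. ((coef g n + coef h n)\<^sup>2 - (coef g n - coef h n)\<^sup>2) / 4)
      sums (((\<integral>z. (g z + h z)\<^sup>2 \<partial>M) - (\<integral>z. (g z - h z)\<^sup>2 \<partial>M)) / 4)"
    using square_coef_sums[OF sq_integrable_add[OF g h]] square_coef_sums[OF sq_integrable_diff[OF g h]]
    by (intro sums_divide sums_diff) (simp_all add: coef_add[OF g h] coef_diff[OF g h])
  moreover have "((coef g n + coef h n)\<^sup>2 - (coef g n - coef h n)\<^sup>2) / 4 = coef g n * coef h n" for n
    by (simp add: power2_eq_square algebra_simps)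
  moreover have "(\<integral>z. (g z + h z)\<^sup>2 \<partial>M) - (\<integral>z. (g z - h z)\<^sup>2 \<partial>M)
      = (\<integral>z. (g z + h z)\<^sup>2 - (g z - h z)\<^sup>2 \<partial>M)"
    using sq_integrable_add[OF g h] sq_integrable_diff[OF g h] by (simp add: sq_integrable_def)
  moreover have "\<dots> = (\<integral>z. 4 * (g z * h z) \<partial>M)"
    by (rule Bochner_Integration.integral_cong) (simp_all add: power2_eq_square algebra_simps)
  ultimately show ?thesis by simp
qed

end

lemma (in prob_space) centered_gaussian_if_char:
  assumes [measurable]: "X \<in> borel_measurable M" and "s > 0"
    and char: "\<And>t. char (distr M borel X) t = complex_of_real (exp (- (t\<^sup>2 * s) / 2))"
  shows "centered_gaussian M X"
proof -
  define \<sigma> where "\<sigma> = sqrt s"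
  have \<sigma>: "\<sigma> > 0" unfolding \<sigma>_def using \<open>s > 0\<close> by simp
  define Z where "Z x = X x / \<sigma>" for x
  have [measurable]: "Z \<in> borel_measurable M" unfolding Z_def by measurable
  have "char (distr M borel Z) t = char std_normal_distribution t" for t
  proof -
    have "char (distr M borel Z) t = char (distr M borel X) (t / \<sigma>)"
      unfolding char_def Z_def by (subst (1 2) integral_distr) auto
    also have "\<dots> = exp (- t\<^sup>2 / 2)"
      using \<open>s > 0\<close> by (simp add: char \<sigma>_def power_divide)
    finally show ?thesis by (simp add: char_std_normal_distribution)
  qed
  then have "distr M borel Z = std_normal_distribution"
    by (intro Levy_uniqueness real_dist_normal_dist real_distribution_distr) auto
  then have "distributed M lborel (\<lambda>x. (X x - 0) / \<sigma>) std_normal_density"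
    unfolding distributed_def Z_def by (auto simp: distr_cong[OF refl sets_lborel])
  then have "distributed M lborel X (normal_density 0 \<sigma>)"
    using normal_standard_normal_convert[OF \<sigma>] by simp
  then have "distr M borel X = density lborel (normal_density 0 \<sigma>)"
    unfolding distributed_def by (auto simp: distr_cong[OF refl sets_lborel])
  then show ?thesis
    using \<sigma> unfolding centered_gaussian_def by (intro conjI exI[of _ \<sigma>]) auto
qed

abbreviation iid_std_normal :: "(nat \<Rightarrow> real) measure" where
  "iid_std_normal \<equiv> PiM UNIV (\<lambda>_. std_normal_distribution)"

interpretation iid: product_prob_space "\<lambda>_::nat. std_normal_distribution" UNIV
  by (simp add: product_prob_space_def product_sigma_finite_def prob_space_normal_density
      prob_space_imp_sigma_finite product_prob_space_axioms_def)

lemma distr_iid_std_normal_coord: "distr iid_std_normal borel (\<lambda>\<omega>. \<omega> n) = std_normal_distribution"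
proof -
  have "distr iid_std_normal borel (\<lambda>\<omega>. \<omega> n) = distr iid_std_normal std_normal_distribution (\<lambda>\<omega>. \<omega> n)"
    by (rule distr_cong) auto
  also have "\<dots> = std_normal_distribution" by (rule iid.PiM_component) simp
  finally show ?thesis .
qed

lemma iid_std_normal_coord_measurable [measurable]: "(\<lambda>\<omega>. \<omega> n) \<in> borel_measurable iid_std_normal"
  using measurable_component_singleton[of n UNIV "\<lambda>_. std_normal_distribution"]
  by (simp add: measurable_def)

lemma
  fixes g :: "real \<Rightarrow> 'c::{banach, second_countable_topology}"
  assumes [measurable]: "g \<in> borel_measurable borel"
  shows integral_iid_std_normal_coord:
      "(\<integral>\<omega>. g (\<omega> n) \<partial>iid_std_normal) = (\<integral>x. g x \<partial>std_normal_distribution)"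
    and integrable_iid_std_normal_coord_iff:
      "integrable iid_std_normal (\<lambda>\<omega>. g (\<omega> n)) \<longleftrightarrow> integrable std_normal_distribution g"
  using integral_distr[of "\<lambda>\<omega>. \<omega> n" iid_std_normal borel g]
    integrable_distr_eq[of "\<lambda>\<omega>. \<omega> n" iid_std_normal borel g]
  by (simp_all add: distr_iid_std_normal_coord)

lemma indep_vars_iid_std_normal: "prob_space.indep_vars iid_std_normal (\<lambda>_. borel) (\<lambda>i \<omega>. \<omega> i) UNIV"
proof -
  have "distr iid_std_normal (\<Pi>\<^sub>M i\<in>UNIV. borel) (\<lambda>x. \<lambda>i\<in>UNIV. x i) = iid_std_normal"
    by (simp add: restrict_UNIV, rule distr_id2) (auto intro!: sets_PiM_cong)
  then show ?thesis
    by (subst iid.P.indep_vars_iff_distr_eq_PiM) (auto simp: distr_iid_std_normal_coord)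
qed

lemma
  shows integral_iid_std_normal_coord_square: "(\<integral>\<omega>. (\<omega> n)\<^sup>2 \<partial>iid_std_normal) = 1"
    and integrable_iid_std_normal_coord_square: "integrable iid_std_normal (\<lambda>\<omega>. (\<omega> n)\<^sup>2)"
    and integral_iid_std_normal_coord_eq_0: "(\<integral>\<omega>. \<omega> n \<partial>iid_std_normal) = 0"
    and integrable_iid_std_normal_coord: "integrable iid_std_normal (\<lambda>\<omega>. \<omega> n)"
  using integral_iid_std_normal_coord[of "\<lambda>x. x^2" n] integrable_iid_std_normal_coord_iff[of "\<lambda>x. x^2" n]
    integral_iid_std_normal_coord[of "\<lambda>x. x" n] integrable_iid_std_normal_coord_iff[of "\<lambda>x. x" n]
    std_normal_distribution_even_moments(1)[of 1] integrable_std_normal_distribution_moment[of 2]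
    integral_std_normal_distribution_moment_odd[of 1, simplified] integrable_std_normal_distribution_moment[of 1]
  by simp_all

lemma integral_iid_std_normal_coord_mult:
  assumes "n \<noteq> m"
  shows "(\<integral>\<omega>. \<omega> n * \<omega> m \<partial>iid_std_normal) = 0"
proof -
  have "prob_space.indep_vars iid_std_normal (\<lambda>_. borel) (\<lambda>i \<omega>. \<omega> i) {n, m}"
    by (rule iid.P.indep_vars_subset[OF indep_vars_iid_std_normal]) auto
  then have "(\<integral>\<omega>. (\<Prod>i\<in>{n,m}. \<omega> i) \<partial>iid_std_normal) = (\<Prod>i\<in>{n,m}. \<integral>\<omega>. \<omega> i \<partial>iid_std_normal)"
    by (intro iid.P.indep_vars_lebesgue_integral) (auto simp: integrable_iid_std_normal_coord)
  then show ?thesis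
    using assms by (simp add: integral_iid_std_normal_coord_eq_0)
qed

interpretation iid_coord: orthogonal_system iid_std_normal "\<lambda>n \<omega>. \<omega> n"
  by unfold_locales
    (simp_all add: sq_integrable_def integrable_iid_std_normal_coord_square
      integral_iid_std_normal_coord_square integral_iid_std_normal_coord_mult)

lemma char_iid_std_normal_partial_series:
  "char (distr iid_std_normal borel (partial_series a (\<lambda>n \<omega>. \<omega> n) N)) t
    = complex_of_real (exp (- (t\<^sup>2 * (\<Sum>n<N. (a n)\<^sup>2)) / 2))"
proof -
  have "prob_space.indep_vars iid_std_normal (\<lambda>_. borel) (\<lambda>i \<omega>. a i * \<omega> i) {..<N}"
    using iid.P.indep_vars_compose2[OF iid.P.indep_vars_subset[OF indep_vars_iid_std_normal, of "{..<N}"],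
        of "\<lambda>i x. a i * x" "\<lambda>_. borel"]
    by simp
  then have "char (distr iid_std_normal borel (partial_series a (\<lambda>n \<omega>. \<omega> n) N)) t
      = (\<Prod>i<N. char (distr iid_std_normal borel (\<lambda>\<omega>. a i * \<omega> i)) t)"
    unfolding partial_series_def by (rule iid.P.char_distr_sum)
  also have "\<dots> = (\<Prod>i<N. complex_of_real (exp (- ((t * a i)\<^sup>2) / 2)))"
  proof (rule prod.cong[OF refl])
    fix i
    have "char (distr iid_std_normal borel (\<lambda>\<omega>. a i * \<omega> i)) t
        = (CLINT \<omega>|iid_std_normal. iexp ((t * a i) * \<omega> i))"
      unfolding char_def by (subst integral_distr) (auto simp: mult.assoc)
    also have "\<dots> = char std_normal_distribution (t * a i)"
      unfolding char_def by (rule integral_iid_std_normal_coord) simp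
    finally show "char (distr iid_std_normal borel (\<lambda>\<omega>. a i * \<omega> i)) t
        = complex_of_real (exp (- ((t * a i)\<^sup>2) / 2))"
      by (simp add: char_std_normal_distribution)
  qed
  also have "\<dots> = complex_of_real (exp (\<Sum>i<N. - ((t * a i)\<^sup>2) / 2))"
    by (simp add: exp_sum)
  also have "(\<Sum>i<N. - ((t * a i)\<^sup>2) / 2) = - (t\<^sup>2 * (\<Sum>n<N. (a n)\<^sup>2)) / 2"
    by (simp add: sum_divide_distrib[symmetric] sum_negf sum_distrib_left power_mult_distrib)
  finally show ?thesis .
qed

text \<open>By dominated convergence the characteristic functions of the partial sums, taken along
  \<open>block_index a\<close>, converge to that of the a.e.\ limit.\<close>
lemma char_iid_std_normal_series_limit:
  assumes sa: "summable (\<lambda>n. (a n)\<^sup>2)"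
  shows "char (distr iid_std_normal borel (series_limit a (\<lambda>n \<omega>. \<omega> n))) t
    = complex_of_real (exp (- (t\<^sup>2 * (\<Sum>n. (a n)\<^sup>2)) / 2))"
proof -
  let ?S = "\<lambda>j. partial_series a (\<lambda>n \<omega>. \<omega> n) (block_index a j)"
  let ?Y = "series_limit a (\<lambda>n \<omega>. \<omega> n)"
  have "(\<lambda>j. CLINT \<omega>|iid_std_normal. iexp (t * ?S j \<omega>)) \<longlonglongrightarrow> (CLINT \<omega>|iid_std_normal. iexp (t * ?Y \<omega>))"
  proof (rule integral_dominated_convergence[where w = "\<lambda>_. 1"])
    show "AE \<omega> in iid_std_normal. (\<lambda>j. iexp (t * ?S j \<omega>)) \<longlonglongrightarrow> iexp (t * ?Y \<omega>)"
      using iid_coord.AE_partial_series_tendsto[OF sa] by (rule AE_mp) (auto intro!: AE_I2 tendsto_intros)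
  qed (auto simp: norm_exp_i_times[of "t * _", simplified])
  moreover have "(CLINT \<omega>|iid_std_normal. iexp (t * ?S j \<omega>)) = exp (- (t\<^sup>2 * (\<Sum>n<block_index a j. (a n)\<^sup>2)) / 2)" for j
    using char_iid_std_normal_partial_series[of a "block_index a j" t]
    unfolding char_def by (subst (asm) integral_distr) auto
  moreover have "(\<lambda>j. complex_of_real (exp (- (t\<^sup>2 * (\<Sum>n<block_index a j. (a n)\<^sup>2)) / 2)))
      \<longlonglongrightarrow> exp (- (t\<^sup>2 * (\<Sum>n. (a n)\<^sup>2)) / 2)"
    by (intro tendsto_intros tendsto_sum_block_index[OF sa]) simp
  ultimately show ?thesis
    unfolding char_def by (subst integral_distr) (auto intro: LIMSEQ_unique)
qed

lemma centered_gaussian_iid_std_normal_series_limit: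
  assumes sa: "summable (\<lambda>n. (a n)\<^sup>2)"
  shows "centered_gaussian iid_std_normal (series_limit a (\<lambda>n \<omega>. \<omega> n))"
proof (cases "(\<Sum>n. (a n)\<^sup>2) = 0")
  case True
  then have "a n = 0" for n
    using suminf_eq_zero_iff[OF sa] by auto
  then have "series_limit a (\<lambda>n \<omega>. \<omega> n) = (\<lambda>\<omega>. 0)"
    by (intro ext) (simp add: series_limit_def partial_series_def)
  then show ?thesis
    unfolding centered_gaussian_def by (intro conjI exI[of _ 0]) (auto simp: iid.P.distr_const)
next
  case False
  then have "(\<Sum>n. (a n)\<^sup>2) > 0"
    using suminf_nonneg[OF sa] by (simp add: less_le)
  then show ?thesis
    using char_iid_std_normal_series_limit[OF sa]
    by (intro iid.P.centered_gaussian_if_char iid_coord.series_limit_measurable) auto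
qed

lemma integral_iid_std_normal_series_limit_mult:
  assumes "summable (\<lambda>n. (a n)\<^sup>2)" "summable (\<lambda>n. (b n)\<^sup>2)"
  shows "integrable iid_std_normal (\<lambda>\<omega>. series_limit a (\<lambda>n \<omega>. \<omega> n) \<omega> * series_limit b (\<lambda>n \<omega>. \<omega> n) \<omega>)"
    and "(\<lambda>n. a n * b n) sums
      (\<integral>\<omega>. series_limit a (\<lambda>n \<omega>. \<omega> n) \<omega> * series_limit b (\<lambda>n \<omega>. \<omega> n) \<omega> \<partial>iid_std_normal)"
  using integrable_mult_sq_integrable[OF iid_coord.series_limit_sq_integrable iid_coord.series_limit_sq_integrable]
    iid_coord.integral_series_limit_mult_sums integral_iid_std_normal_coord_square assms
  by blast+

lemma nn_integral_pos_eq_neg_if_integral_eq_0: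
  fixes u :: "'a \<Rightarrow> real"
  assumes "integrable M u" "(\<integral>z. u z \<partial>M) = 0"
  shows "(\<integral>\<^sup>+z. ennreal (u z) \<partial>M) = (\<integral>\<^sup>+z. ennreal (- u z) \<partial>M)"
proof -
  have pos: "(\<integral>\<^sup>+z. ennreal (u z) \<partial>M) < \<top>" and neg: "(\<integral>\<^sup>+z. ennreal (- u z) \<partial>M) < \<top>"
    using integrableD(2)[OF assms(1)] integrableD(2)[OF integrable_minus[OF assms(1)]]
    by (simp_all add: less_top)
  have "enn2real (\<integral>\<^sup>+z. ennreal (u z) \<partial>M) = enn2real (\<integral>\<^sup>+z. ennreal (- u z) \<partial>M)"
    using assms(2) unfolding real_lebesgue_integral_def[OF assms(1)] by simp
  then show ?thesis
    by (metis ennreal_enn2real[OF pos] ennreal_enn2real[OF neg])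
qed

text \<open>The two signed parts of \<open>h\<close> define measures that agree on the generator, hence everywhere.\<close>
lemma (in sigma_finite_measure) AE_eq_0_if_integral_indicator_eq_0:
  fixes h :: "'a \<Rightarrow> real" and A :: "nat \<Rightarrow> 'a set"
  assumes E: "Int_stable E" "E \<subseteq> Pow (space M)" "sets M = sigma_sets (space M) E"
    and A: "range A \<subseteq> E" "(\<Union>i. A i) = space M"
    and [measurable]: "h \<in> borel_measurable M"
    and integrable: "\<And>X. X \<in> E \<Longrightarrow> integrable M (\<lambda>z. h z * indicator X z)"
    and zero: "\<And>X. X \<in> E \<Longrightarrow> (\<integral>z. h z * indicator X z \<partial>M) = 0"
  shows "AE z in M. h z = 0"
proof -
  have sets: "X \<in> sets M" if "X \<in> E" for X
    using that E(3) by (auto intro: sigma_sets.Basic)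
  have density: "emeasure (density M (\<lambda>z. ennreal (f z))) X = (\<integral>\<^sup>+z. ennreal (f z * indicator X z) \<partial>M)"
    if "X \<in> E" "f \<in> borel_measurable M" for X and f :: "'a \<Rightarrow> real"
    using sets[OF that(1)] that(2) by (subst emeasure_density) (auto intro!: nn_integral_cong split: split_indicator)
  have "density M (\<lambda>z. ennreal (h z)) = density M (\<lambda>z. ennreal (- h z))"
  proof (rule measure_eqI_generator_eq[OF E(1,2) _ _ _ A])
    show "emeasure (density M (\<lambda>z. ennreal (h z))) X = emeasure (density M (\<lambda>z. ennreal (- h z))) X"
      if "X \<in> E" for X
      using nn_integral_pos_eq_neg_if_integral_eq_0[OF integrable zero, OF that that]
      by (simp add: density[OF that])
    show "emeasure (density M (\<lambda>z. ennreal (h z))) (A i) \<noteq> \<infinity>" for i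
    proof -
      have "A i \<in> E" using A(1) by auto
      then show ?thesis using integrableD(2)[OF integrable] by (simp add: density)
    qed
  qed (use E(3) in auto)
  then have "AE z in M. ennreal (h z) = ennreal (- h z)"
    by (intro density_unique) auto
  then show ?thesis
  proof (rule AE_mp, intro AE_I2 impI)
    fix z assume eq: "ennreal (h z) = ennreal (- h z)"
    show "h z = 0"
    proof (cases "h z \<ge> 0")
      case True
      then show ?thesis using eq by (simp add: ennreal_neg)
    next
      case False
      then show ?thesis using eq by (simp add: ennreal_neg)
    qed
  qed
qed

lemma (in sigma_finite_measure) AE_pair_fst_snd:
  assumes "AE x in M. P x"
  shows "AE z in M \<Otimes>\<^sub>M M. P (fst z) \<and> P (snd z)"
proof -
  from assms obtain N where N: "{x \<in> space M. \<not> P x} \<subseteq> N" "N \<in> null_sets M"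
    by (auto elim!: AE_E)
  show ?thesis
  proof (rule AE_I')
    show "N \<times> space M \<union> space M \<times> N \<in> null_sets (M \<Otimes>\<^sub>M M)"
      using N(2) by (intro null_sets.Un times_in_null_sets1 times_in_null_sets2) auto
  qed (use N(1) in \<open>auto simp: space_pair_measure\<close>)
qed

lemma countable_Int_stable_open_generator:
  fixes C :: "'a::second_countable_topology set set"
  assumes C: "countable C" "\<And>c. c \<in> C \<Longrightarrow> open c" "\<Union>C = UNIV"
  obtains E where "countable E" "Int_stable E" "sigma_sets UNIV E = sets borel" "C \<subseteq> E"
    "\<And>X. X \<in> E \<Longrightarrow> open X \<and> (\<exists>c\<in>C. X \<subseteq> c)"
proof -
  obtain \<B> :: "'a set set" where "countable \<B>" and \<B>: "topological_basis \<B>"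
    using ex_countable_basis by blast
  define \<F> where "\<F> = {F. finite F \<and> F \<subseteq> \<B> \<union> C \<and> F \<inter> C \<noteq> {}}"
  define E where "E = Inter ` \<F>"
  have "countable {F. finite F \<and> F \<subseteq> \<B> \<union> C}"
    using \<open>countable \<B>\<close> C(1) by (intro countable_Collect_finite_subset) auto
  then have "countable \<F>" by (rule countable_subset[rotated]) (auto simp: \<F>_def)
  then have countable: "countable E" unfolding E_def by simp
  have Int_stable: "Int_stable E"
  proof (rule Int_stableI)
    fix a b assume "a \<in> E" "b \<in> E"
    then obtain F1 F2 where "F1 \<in> \<F>" "a = \<Inter>F1" "F2 \<in> \<F>" "b = \<Inter>F2" unfolding E_def by blast
    then have "F1 \<union> F2 \<in> \<F>" "a \<inter> b = \<Inter>(F1 \<union> F2)" unfolding \<F>_def by auto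
    then show "a \<inter> b \<in> E" unfolding E_def by blast
  qed
  have pair: "\<Inter>{b, c} \<in> E" if "b \<in> \<B> \<union> C" "c \<in> C" for b c
    unfolding E_def \<F>_def using that by (intro imageI) auto
  have "C \<subseteq> E" using pair[of c c for c] by auto
  have E: "open X \<and> (\<exists>c\<in>C. X \<subseteq> c)" if "X \<in> E" for X
  proof -
    from that obtain F where F: "finite F" "F \<subseteq> \<B> \<union> C" "F \<inter> C \<noteq> {}" "X = \<Inter>F"
      unfolding E_def \<F>_def by blast
    have "\<forall>b\<in>F. open b" using F(2) C(2) topological_basis_open[OF \<B>] by blast
    then have "open X" using F(1,4) by (simp add: open_Inter)
    moreover have "\<exists>c\<in>C. X \<subseteq> c" using F(3,4) by blast
    ultimately show ?thesis ..
  qed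
  have sigma: "sigma_sets UNIV E = sets borel"
  proof
    have "E \<subseteq> sets borel" using E by auto
    then show "sigma_sets UNIV E \<subseteq> sets borel"
      using sets.sigma_sets_subset[of E borel] by simp
    have "b \<in> sigma_sets UNIV E" if "b \<in> \<B>" for b
    proof -
      have "(\<Union>c\<in>C. b \<inter> c) \<in> sigma_sets UNIV E"
        using C(1) pair[of b] \<open>b \<in> \<B>\<close> by (intro sigma_sets_UNION) (auto intro: sigma_sets.Basic)
      moreover have "(\<Union>c\<in>C. b \<inter> c) = b" using C(3) by auto
      ultimately show ?thesis by simp
    qed
    then have "sigma_sets UNIV \<B> \<subseteq> sigma_sets UNIV E"
      by (intro sigma_sets_mono) auto
    then show "sets borel \<subseteq> sigma_sets UNIV E"
      unfolding borel_eq_countable_basis[OF \<open>countable \<B>\<close> \<B>] by simp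
  qed
  from countable Int_stable sigma \<open>C \<subseteq> E\<close> E show ?thesis by (rule that)
qed

lemma radon_countable_open_cover:
  fixes \<nu> :: "'a::{second_countable_topology, t2_space} measure"
  assumes lc: "locally_compact_space (euclidean :: 'a topology)" and radon: "radon_measure \<nu>"
  obtains C where "countable C" "\<Union>C = UNIV"
    "\<And>B. B \<in> C \<Longrightarrow> open B \<and> B \<in> rel_compact_borel \<and> emeasure \<nu> B < \<infinity>"
proof -
  obtain \<B> :: "'a set set" where "countable \<B>" and \<B>: "topological_basis \<B>"
    using ex_countable_basis by blast
  define C where "C = {B \<in> \<B>. \<exists>K. compact K \<and> B \<subseteq> K}"
  have "countable C" unfolding C_def using \<open>countable \<B>\<close> by auto
  moreover have "open B \<and> B \<in> rel_compact_borel \<and> emeasure \<nu> B < \<infinity>" if "B \<in> C" for B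
  proof -
    from that obtain K where "B \<in> \<B>" "compact K" "B \<subseteq> K" unfolding C_def by blast
    have "open B" using topological_basis_open[OF \<B> \<open>B \<in> \<B>\<close>] .
    have "closure B \<subseteq> K" using closure_minimal[OF \<open>B \<subseteq> K\<close> compact_imp_closed[OF \<open>compact K\<close>]] .
    then have "compact (closure B)"
      using \<open>compact K\<close> compact_Int_closed[of K "closure B"] by (simp add: Int_absorb1)
    moreover have "emeasure \<nu> B \<le> emeasure \<nu> (closure B)"
      using radon by (intro emeasure_mono closure_subset) (auto simp: radon_measure_def)
    ultimately show ?thesis
      using radon \<open>open B\<close> by (auto simp: rel_compact_borel_def radon_measure_def intro: le_less_trans)
  qed
  moreover have "x \<in> \<Union>C" for x
  proof -
    have "\<exists>U K. openin euclidean U \<and> compactin euclidean K \<and> x \<in> U \<and> U \<subseteq> K"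
      using lc unfolding locally_compact_space_def by simp
    then obtain U K where "open U" "compact K" "x \<in> U" "U \<subseteq> K" by auto
    moreover obtain B where "B \<in> \<B>" "x \<in> B" "B \<subseteq> U"
      using topological_basisE[OF \<B> \<open>open U\<close> \<open>x \<in> U\<close>] by blast
    ultimately show ?thesis unfolding C_def by blast
  qed
  ultimately show ?thesis using that by blast
qed

lemma radon_sigma_finite:
  fixes \<nu> :: "'a::{second_countable_topology, t2_space} measure"
  assumes "locally_compact_space (euclidean :: 'a topology)" and radon: "radon_measure \<nu>"
  shows "sigma_finite_measure \<nu>"
proof
  obtain C where "countable C" "\<Union>C = UNIV"
    and C: "\<And>B. B \<in> C \<Longrightarrow> open B \<and> B \<in> rel_compact_borel \<and> emeasure \<nu> B < \<infinity>"
    using radon_countable_open_cover[OF assms] by blast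
  moreover have "space \<nu> = UNIV" "sets \<nu> = sets borel"
    using radon sets_eq_imp_space_eq[of \<nu> borel] by (auto simp: radon_measure_def)
  ultimately show "\<exists>A. countable A \<and> A \<subseteq> sets \<nu> \<and> \<Union>A = space \<nu> \<and> (\<forall>a\<in>A. emeasure \<nu> a \<noteq> \<infinity>)"
    by (intro exI[of _ C]) (auto dest: C)
qed

lemma radon_exists_total_sequence:
  fixes \<nu> :: "'a::{second_countable_topology, t2_space} measure"
  assumes lc: "locally_compact_space (euclidean :: 'a topology)" and radon: "radon_measure \<nu>"
  shows "\<exists>d. total_sequence \<nu> d"
proof -
  interpret sigma_finite_measure \<nu> by (rule radon_sigma_finite[OF assms])
  have sets: "sets \<nu> = sets borel" and space: "space \<nu> = UNIV"
    using radon sets_eq_imp_space_eq[of \<nu> borel] by (auto simp: radon_measure_def)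
  obtain C where "countable C" "\<Union>C = UNIV"
    and C: "\<And>B. B \<in> C \<Longrightarrow> open B \<and> B \<in> rel_compact_borel \<and> emeasure \<nu> B < \<infinity>"
    using radon_countable_open_cover[OF assms] by blast
  obtain E where "countable E" "Int_stable E" "sigma_sets UNIV E = sets borel" "C \<subseteq> E"
    and E: "\<And>X. X \<in> E \<Longrightarrow> open X \<and> (\<exists>c\<in>C. X \<subseteq> c)"
    using countable_Int_stable_open_generator[OF \<open>countable C\<close> _ \<open>\<Union>C = UNIV\<close>] C by blast
  have finite: "X \<in> sets \<nu> \<and> emeasure \<nu> X < \<infinity>" if X: "X \<in> E" for X
  proof -
    obtain c where "c \<in> C" "X \<subseteq> c" using E[OF X] by blast
    then show ?thesis
      using E[OF X] C[of c] sets by (auto intro: le_less_trans[OF emeasure_mono])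
  qed
  have "C \<noteq> {}" using \<open>\<Union>C = UNIV\<close> by auto
  then have "E \<noteq> {}" using \<open>C \<subseteq> E\<close> by auto
  define d where "d n = (indicator (from_nat_into E n) :: 'a \<Rightarrow> real)" for n
  have range: "range (from_nat_into E) = E"
    by (rule range_from_nat_into[OF \<open>E \<noteq> {}\<close> \<open>countable E\<close>])
  have "total_sequence \<nu> d"
  proof
    show "sq_integrable \<nu> (d n)" for n
      using finite range unfolding d_def by (intro sq_integrable_indicator) auto
    fix h assume h: "sq_integrable \<nu> h" and orth: "\<And>n. (\<integral>z. h z * d n z \<partial>\<nu>) = 0"
    show "AE z in \<nu>. h z = 0"
    proof (rule AE_eq_0_if_integral_indicator_eq_0[where A = "from_nat_into C"])
      show "integrable \<nu> (\<lambda>z. h z * indicator X z)" if "X \<in> E" for X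
        using finite[OF that] by (intro integrable_mult_sq_integrable h sq_integrable_indicator) auto
      show "(\<integral>z. h z * indicator X z \<partial>\<nu>) = 0" if X: "X \<in> E" for X
      proof -
        obtain n where "from_nat_into E n = X" using from_nat_into_surj[OF \<open>countable E\<close> X] ..
        then show ?thesis using orth[of n] unfolding d_def by simp
      qed
      show "range (from_nat_into C) \<subseteq> E" "(\<Union>i. from_nat_into C i) = space \<nu>"
        using range_from_nat_into[OF \<open>C \<noteq> {}\<close> \<open>countable C\<close>] \<open>C \<subseteq> E\<close> \<open>\<Union>C = UNIV\<close> space by auto
    qed (use \<open>Int_stable E\<close> \<open>sigma_sets UNIV E = sets borel\<close> h sets space in auto)
  qed
  then show ?thesis by blast
qed

lemma AE_sq_integrable_if_locally_trace_class:
  fixes \<nu> :: "'a::{second_countable_topology, t2_space} measure"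
  assumes lc: "locally_compact_space (euclidean :: 'a topology)" and radon: "radon_measure \<nu>"
    and \<kappa> [measurable]: "(\<lambda>(x, y). \<kappa> x y) \<in> borel_measurable (\<nu> \<Otimes>\<^sub>M \<nu>)"
    and trace: "locally_trace_class_sqrt_kernel \<nu> \<kappa>"
  shows "AE x in \<nu>. sq_integrable \<nu> (\<kappa> x)"
proof -
  interpret sigma_finite_measure \<nu> by (rule radon_sigma_finite[OF lc radon])
  have sets [measurable_cong]: "sets \<nu> = sets borel"
    using radon by (simp add: radon_measure_def)
  obtain C where "countable C" "\<Union>C = UNIV"
    and C: "\<And>B. B \<in> C \<Longrightarrow> open B \<and> B \<in> rel_compact_borel \<and> emeasure \<nu> B < \<infinity>"
    using radon_countable_open_cover[OF lc radon] by blast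
  have \<kappa>_measurable [measurable]: "\<kappa> x \<in> borel_measurable \<nu>" for x
    using measurable_Pair2[OF \<kappa>, of x] sets_eq_imp_space_eq[OF sets] by simp
  define H where "H x = (\<integral>\<^sup>+y. ennreal ((\<kappa> x y)\<^sup>2) \<partial>\<nu>)" for x
  have [measurable]: "H \<in> borel_measurable \<nu>" unfolding H_def by measurable
  have "AE x in \<nu>. x \<in> B \<longrightarrow> H x \<noteq> \<infinity>" if "B \<in> C" for B
  proof -
    have [measurable]: "B \<in> sets \<nu>" using C[OF that] sets by auto
    have "(\<integral>\<^sup>+x. indicator B x * H x \<partial>\<nu>) < \<infinity>"
      using trace C[OF that] unfolding locally_trace_class_sqrt_kernel_def H_def by blast
    then have "AE x in \<nu>. indicator B x * H x \<noteq> \<infinity>"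
      by (intro nn_integral_PInf_AE) auto
    then show ?thesis by (rule AE_mp) (auto intro!: AE_I2)
  qed
  then have "AE x in \<nu>. \<forall>B\<in>C. x \<in> B \<longrightarrow> H x \<noteq> \<infinity>"
    by (subst AE_ball_countable[OF \<open>countable C\<close>]) blast
  then show ?thesis
  proof (rule AE_mp, intro AE_I2 impI)
    fix x assume "\<forall>B\<in>C. x \<in> B \<longrightarrow> H x \<noteq> \<infinity>"
    then have "H x < \<infinity>" using \<open>\<Union>C = UNIV\<close> by (auto simp: less_top)
    moreover have "(\<lambda>y. (\<kappa> x y)\<^sup>2) \<in> borel_measurable \<nu>" by measurable
    ultimately have "integrable \<nu> (\<lambda>y. (\<kappa> x y)\<^sup>2)"
      unfolding H_def by (intro integrableI_nonneg) auto
    then show "sq_integrable \<nu> (\<kappa> x)"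
      unfolding sq_integrable_def by simp
  qed
qed

context total_sequence
begin

definition isonormal :: "('a \<Rightarrow> real) \<Rightarrow> (nat \<Rightarrow> real) \<Rightarrow> real" where
  "isonormal g = series_limit (coef g) (\<lambda>n \<omega>. \<omega> n)"

lemma centered_gaussian_isonormal: "sq_integrable M g \<Longrightarrow> centered_gaussian iid_std_normal (isonormal g)"
  unfolding isonormal_def
  by (intro centered_gaussian_iid_std_normal_series_limit summable_square_coef)

lemma integral_isonormal_mult:
  assumes "sq_integrable M g" "sq_integrable M h"
  shows "integrable iid_std_normal (\<lambda>\<omega>. isonormal g \<omega> * isonormal h \<omega>)"
    and "(\<integral>\<omega>. isonormal g \<omega> * isonormal h \<omega> \<partial>iid_std_normal) = (\<integral>z. g z * h z \<partial>M)"
  using integral_iid_std_normal_series_limit_mult[OF summable_square_coef summable_square_coef, OF assms]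
    coef_mult_sums[OF assms]
  unfolding isonormal_def by (auto dest: sums_unique2)

lemma measurable_isonormal_kernel:
  assumes "sigma_finite_measure M" and [measurable]: "(\<lambda>(x, y). q x y) \<in> borel_measurable (M \<Otimes>\<^sub>M M)"
  shows "(\<lambda>(x, \<omega>). isonormal (q x) \<omega>) \<in> borel_measurable (M \<Otimes>\<^sub>M iid_std_normal)"
proof -
  interpret sigma_finite_measure M by (rule assms(1))
  have "(\<lambda>x. coef (q x) n) \<in> borel_measurable M" for n
    unfolding coef_def by measurable
  then show ?thesis
    unfolding isonormal_def by (rule measurable_series_limit_param) simp
qed

end

theorem proposition3p1:
  fixes \<nu> :: "'a::polish_space measure"
    and \<kappa> :: "'a \<Rightarrow> 'a \<Rightarrow> real"
  assumes "locally_compact_space (euclidean :: 'a topology)"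
    and "radon_measure \<nu>"
    and "non_atomic \<nu>"
    and "bounded_sa_nonneg_kernel \<nu> \<kappa>"
    and "locally_trace_class_sqrt_kernel \<nu> \<kappa>"
  shows "\<exists>(P :: (nat \<Rightarrow> real) measure) (Y :: 'a \<Rightarrow> (nat \<Rightarrow> real) \<Rightarrow> real).
           prob_space P \<and>
           (\<lambda>(x,\<omega>). Y x \<omega>) \<in> borel_measurable (\<nu> \<Otimes>\<^sub>M P) \<and>
           (AE x in \<nu>. centered_gaussian P (Y x)) \<and>
           (AE z in \<nu> \<Otimes>\<^sub>M \<nu>. integrable P (\<lambda>\<omega>. Y (fst z) \<omega> * Y (snd z) \<omega>) \<and>
               (\<integral>\<omega>. Y (fst z) \<omega> * Y (snd z) \<omega> \<partial>P) = square_kernel \<nu> \<kappa> (fst z) (snd z)) \<and>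
           (AE x in \<nu>. integrable P (\<lambda>\<omega>. Y x \<omega> * Y x \<omega>) \<and>
               (\<integral>\<omega>. Y x \<omega> * Y x \<omega> \<partial>P) = square_kernel \<nu> \<kappa> x x)"
proof -
  have \<kappa>: "(\<lambda>(x, y). \<kappa> x y) \<in> borel_measurable (\<nu> \<Otimes>\<^sub>M \<nu>)"
    using assms(4) by (simp add: bounded_sa_nonneg_kernel_def)
  interpret sigma_finite_measure \<nu> by (rule radon_sigma_finite[OF assms(1,2)])
  obtain d where "total_sequence \<nu> d" using radon_exists_total_sequence[OF assms(1,2)] ..
  then interpret total_sequence \<nu> d .
  have AE: "AE x in \<nu>. sq_integrable \<nu> (\<kappa> x)"
    by (rule AE_sq_integrable_if_locally_trace_class[OF assms(1,2) \<kappa> assms(5)])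
  show ?thesis
  proof (intro exI conjI)
    show "(\<lambda>(x, \<omega>). isonormal (\<kappa> x) \<omega>) \<in> borel_measurable (\<nu> \<Otimes>\<^sub>M iid_std_normal)"
      by (rule measurable_isonormal_kernel[OF sigma_finite_measure_axioms \<kappa>])
    show "AE x in \<nu>. centered_gaussian iid_std_normal (isonormal (\<kappa> x))"
      using AE by eventually_elim (rule centered_gaussian_isonormal)
    show "AE z in \<nu> \<Otimes>\<^sub>M \<nu>. integrable iid_std_normal (\<lambda>\<omega>. isonormal (\<kappa> (fst z)) \<omega> * isonormal (\<kappa> (snd z)) \<omega>) \<and>
        (\<integral>\<omega>. isonormal (\<kappa> (fst z)) \<omega> * isonormal (\<kappa> (snd z)) \<omega> \<partial>iid_std_normal) = square_kernel \<nu> \<kappa> (fst z) (snd z)"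
      using AE_pair_fst_snd[OF AE] by eventually_elim (simp add: integral_isonormal_mult square_kernel_def)
    show "AE x in \<nu>. integrable iid_std_normal (\<lambda>\<omega>. isonormal (\<kappa> x) \<omega> * isonormal (\<kappa> x) \<omega>) \<and>
        (\<integral>\<omega>. isonormal (\<kappa> x) \<omega> * isonormal (\<kappa> x) \<omega> \<partial>iid_std_normal) = square_kernel \<nu> \<kappa> x x"
      using AE by eventually_elim (simp add: integral_isonormal_mult square_kernel_def)
  qed (rule iid.P.prob_space_axioms)
qed

end
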